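(* Let $E$ be a Dedekind complete Riesz space with weak order unit $e$, let $T$ be a conditional expectation operator on $E$ with $Te=e$, and assume $E$ is $T$-universally complete ($E=L^1(T)$). Let $U$ and $V$ be conditional expectation operators on $E$ compatible with $T$. Then for every $g\in L^\infty(T)$, $$\|UVg-Tg\|_{T,1}\le 4\,\alpha_T(U,V)\,\|g\|_{T,\infty}.$$
   Context: A conditional expectation operator on a Dedekind complete Riesz space $E$ with weak order unit is a positive, order continuous, linear projection $T:E\to E$ whose range $R(T)$ is a Dedekind complete Riesz subspace of $E$ and such that $Te$ is a weak order unit of $E$ for every weak order unit $e$ of $E$. $E^u$ denotes the universal completion of $E$. $E$ is $T$-universally complete if for every upwards directed net $(f_\alpha)$ in $E_+$ with $(Tf_\alpha)$ order bounded in $E^u$, the net $(f_\alpha)$ is order convergent in $E$; then $L^1(T):=E$. Products are taken in the $f$-algebra $E^u$ with multiplicative unit $e$. $L^\infty(T):=\{f\in L^1(T): |f|\le g\text{ for some } g\in R(T)_+\}$, $\|f\|_{T,1}:=T|f|$, $\|f\|_{T,\infty}:=\inf\{g\in R(T)_+:|f|\le g\}$. A conditional expectation operator $U$ on $E$ is compatible with $T$ if $TU=T=UT$; $\mathcal{B}(U)$ is the set of band projections $P$ on $E$ with $Pe\in R(U)$. $\alpha_T(U,V):=\sup\{|TPQe-TPe\cdot TQe| : P\in\mathcal{B}(U),\ Q\in\mathcal{B}(V)\}$ (supremum in the order of $E$). *)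

theory Defs
  imports Complex_Main
begin

text \<open>The universal completion E^u of E is modelled as the whole type 'a (a Riesz space:
  an ordered real vector space that is a lattice); E itself is a subset of 'a.\<close>

definition rabs :: "'a::{ordered_real_vector,lattice} \<Rightarrow> 'a" where
  "rabs x = sup x (- x)"

definition is_sup_in :: "'a::{ordered_real_vector,lattice} set \<Rightarrow> 'a set \<Rightarrow> 'a \<Rightarrow> bool" where
  "is_sup_in E A s \<longleftrightarrow> s \<in> E \<and> (\<forall>a\<in>A. a \<le> s) \<and> (\<forall>b\<in>E. (\<forall>a\<in>A. a \<le> b) \<longrightarrow> s \<le> b)"

definition is_inf_in :: "'a::{ordered_real_vector,lattice} set \<Rightarrow> 'a set \<Rightarrow> 'a \<Rightarrow> bool" where
  "is_inf_in E A s \<longleftrightarrow> s \<in> E \<and> (\<forall>a\<in>A. s \<le> a) \<and> (\<forall>b\<in>E. (\<forall>a\<in>A. b \<le> a) \<longrightarrow> b \<le> s)"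

definition sup_in :: "'a::{ordered_real_vector,lattice} set \<Rightarrow> 'a set \<Rightarrow> 'a" where
  "sup_in E A = (THE s. is_sup_in E A s)"

definition inf_in :: "'a::{ordered_real_vector,lattice} set \<Rightarrow> 'a set \<Rightarrow> 'a" where
  "inf_in E A = (THE s. is_inf_in E A s)"

definition riesz_subspace :: "'a::{ordered_real_vector,lattice} set \<Rightarrow> bool" where
  "riesz_subspace E \<longleftrightarrow> 0 \<in> E \<and> (\<forall>x\<in>E. \<forall>y\<in>E. x + y \<in> E) \<and> (\<forall>c x. x \<in> E \<longrightarrow> c *\<^sub>R x \<in> E)
     \<and> (\<forall>x\<in>E. \<forall>y\<in>E. sup x y \<in> E \<and> inf x y \<in> E)"

definition dedekind_complete_on :: "'a::{ordered_real_vector,lattice} set \<Rightarrow> bool" where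
  "dedekind_complete_on E \<longleftrightarrow>
     (\<forall>A. A \<subseteq> E \<and> A \<noteq> {} \<and> (\<exists>b\<in>E. \<forall>a\<in>A. a \<le> b) \<longrightarrow> (\<exists>s. is_sup_in E A s))"

definition laterally_complete :: "'a::{ordered_real_vector,lattice} itself \<Rightarrow> bool" where
  "laterally_complete _ \<longleftrightarrow>
     (\<forall>A::'a set. (\<forall>a\<in>A. 0 \<le> a) \<and> (\<forall>a\<in>A. \<forall>b\<in>A. a \<noteq> b \<longrightarrow> inf a b = 0)
        \<longrightarrow> (\<exists>s. is_sup_in UNIV A s))"

definition universally_complete :: "'a::{ordered_real_vector,lattice} itself \<Rightarrow> bool" where
  "universally_complete t \<longleftrightarrow> dedekind_complete_on (UNIV::'a set) \<and> laterally_complete t"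

definition order_dense :: "'a::{ordered_real_vector,lattice} set \<Rightarrow> bool" where
  "order_dense E \<longleftrightarrow> (\<forall>u. 0 < u \<longrightarrow> (\<exists>x\<in>E. 0 < x \<and> x \<le> u))"

definition is_universal_completion_of :: "'a::{ordered_real_vector,lattice} set \<Rightarrow> bool" where
  "is_universal_completion_of E \<longleftrightarrow>
     universally_complete TYPE('a) \<and> riesz_subspace E \<and> order_dense E"

definition f_algebra_unit :: "('a::{ordered_real_vector,lattice} \<Rightarrow> 'a \<Rightarrow> 'a) \<Rightarrow> 'a \<Rightarrow> bool" where
  "f_algebra_unit mul e \<longleftrightarrow>
     (\<forall>x y z. mul (x + y) z = mul x z + mul y z) \<and>
     (\<forall>x y z. mul x (y + z) = mul x y + mul x z) \<and>
     (\<forall>c x y. mul (c *\<^sub>R x) y = c *\<^sub>R mul x y) \<and>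
     (\<forall>c x y. mul x (c *\<^sub>R y) = c *\<^sub>R mul x y) \<and>
     (\<forall>x y z. mul (mul x y) z = mul x (mul y z)) \<and>
     (\<forall>x y. 0 \<le> x \<and> 0 \<le> y \<longrightarrow> 0 \<le> mul x y) \<and>
     (\<forall>x y z. inf x y = 0 \<and> 0 \<le> z \<longrightarrow> inf (mul z x) y = 0 \<and> inf (mul x z) y = 0) \<and>
     (\<forall>x. mul e x = x \<and> mul x e = x)"

definition weak_order_unit :: "'a::{ordered_real_vector,lattice} set \<Rightarrow> 'a \<Rightarrow> bool" where
  "weak_order_unit E w \<longleftrightarrow> w \<in> E \<and> 0 \<le> w \<and> (\<forall>x\<in>E. inf (rabs x) w = 0 \<longrightarrow> x = 0)"

definition updirected :: "'a::order set \<Rightarrow> bool" where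
  "updirected A \<longleftrightarrow> (\<forall>a\<in>A. \<forall>b\<in>A. \<exists>c\<in>A. a \<le> c \<and> b \<le> c)"

definition downdirected :: "'a::order set \<Rightarrow> bool" where
  "downdirected A \<longleftrightarrow> (\<forall>a\<in>A. \<forall>b\<in>A. \<exists>c\<in>A. c \<le> a \<and> c \<le> b)"

definition linear_on :: "'a::{ordered_real_vector,lattice} set \<Rightarrow> ('a \<Rightarrow> 'a) \<Rightarrow> bool" where
  "linear_on E T \<longleftrightarrow> (\<forall>x\<in>E. \<forall>y\<in>E. T (x + y) = T x + T y) \<and> (\<forall>c. \<forall>x\<in>E. T (c *\<^sub>R x) = c *\<^sub>R T x)"

definition positive_on :: "'a::{ordered_real_vector,lattice} set \<Rightarrow> ('a \<Rightarrow> 'a) \<Rightarrow> bool" where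
  "positive_on E T \<longleftrightarrow> (\<forall>x\<in>E. 0 \<le> x \<longrightarrow> 0 \<le> T x)"

definition order_continuous_on :: "'a::{ordered_real_vector,lattice} set \<Rightarrow> ('a \<Rightarrow> 'a) \<Rightarrow> bool" where
  "order_continuous_on E T \<longleftrightarrow>
     (\<forall>D. D \<subseteq> E \<and> D \<noteq> {} \<and> downdirected D \<and> is_inf_in E D 0 \<longrightarrow> is_inf_in E (T ` D) 0)"

definition cond_exp :: "'a::{ordered_real_vector,lattice} set \<Rightarrow> ('a \<Rightarrow> 'a) \<Rightarrow> bool" where
  "cond_exp E T \<longleftrightarrow> T ` E \<subseteq> E \<and> linear_on E T \<and> positive_on E T \<and> order_continuous_on E T \<and>
     (\<forall>x\<in>E. T (T x) = T x) \<and> riesz_subspace (T ` E) \<and> dedekind_complete_on (T ` E) \<and>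
     (\<forall>w. weak_order_unit E w \<longrightarrow> weak_order_unit E (T w))"

definition T_universally_complete :: "'a::{ordered_real_vector,lattice} set \<Rightarrow> ('a \<Rightarrow> 'a) \<Rightarrow> bool" where
  "T_universally_complete E T \<longleftrightarrow>
     (\<forall>A. A \<subseteq> E \<and> A \<noteq> {} \<and> (\<forall>a\<in>A. 0 \<le> a) \<and> updirected A \<and> (\<exists>b. \<forall>a\<in>A. rabs (T a) \<le> b)
        \<longrightarrow> (\<exists>s. is_sup_in E A s))"

definition Linfty :: "'a::{ordered_real_vector,lattice} set \<Rightarrow> ('a \<Rightarrow> 'a) \<Rightarrow> 'a set" where
  "Linfty E T = {f \<in> E. \<exists>g \<in> T ` E. 0 \<le> g \<and> rabs f \<le> g}"

definition norm_T1 :: "('a::{ordered_real_vector,lattice} \<Rightarrow> 'a) \<Rightarrow> 'a \<Rightarrow> 'a" where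
  "norm_T1 T f = T (rabs f)"

definition norm_Tinf :: "'a::{ordered_real_vector,lattice} set \<Rightarrow> ('a \<Rightarrow> 'a) \<Rightarrow> 'a \<Rightarrow> 'a" where
  "norm_Tinf E T f = inf_in E {g \<in> T ` E. 0 \<le> g \<and> rabs f \<le> g}"

definition band :: "'a::{ordered_real_vector,lattice} set \<Rightarrow> 'a set \<Rightarrow> bool" where
  "band E B \<longleftrightarrow> B \<subseteq> E \<and> riesz_subspace B \<and>
     (\<forall>x\<in>E. \<forall>y\<in>B. rabs x \<le> rabs y \<longrightarrow> x \<in> B) \<and>
     (\<forall>A s. A \<subseteq> B \<and> is_sup_in E A s \<longrightarrow> s \<in> B)"

definition disj_compl :: "'a::{ordered_real_vector,lattice} set \<Rightarrow> 'a set \<Rightarrow> 'a set" where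
  "disj_compl E B = {x \<in> E. \<forall>y\<in>B. inf (rabs x) (rabs y) = 0}"

definition band_projection :: "'a::{ordered_real_vector,lattice} set \<Rightarrow> ('a \<Rightarrow> 'a) \<Rightarrow> bool" where
  "band_projection E P \<longleftrightarrow> (\<exists>B. band E B \<and> (\<forall>x\<in>E. P x \<in> B \<and> x - P x \<in> disj_compl E B))"

definition bandsB :: "'a::{ordered_real_vector,lattice} set \<Rightarrow> 'a \<Rightarrow> ('a \<Rightarrow> 'a) \<Rightarrow> ('a \<Rightarrow> 'a) set" where
  "bandsB E e U = {P. band_projection E P \<and> P e \<in> U ` E}"

definition compatible :: "'a::{ordered_real_vector,lattice} set \<Rightarrow> ('a \<Rightarrow> 'a) \<Rightarrow> ('a \<Rightarrow> 'a) \<Rightarrow> bool" where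
  "compatible E T U \<longleftrightarrow> (\<forall>x\<in>E. T (U x) = T x \<and> U (T x) = T x)"

definition alphaT :: "'a::{ordered_real_vector,lattice} set \<Rightarrow> ('a \<Rightarrow> 'a \<Rightarrow> 'a) \<Rightarrow> 'a \<Rightarrow>
    ('a \<Rightarrow> 'a) \<Rightarrow> ('a \<Rightarrow> 'a) \<Rightarrow> ('a \<Rightarrow> 'a) \<Rightarrow> 'a" where
  "alphaT E mul e T U V = sup_in E
     {rabs (T (P (Q e)) - mul (T (P e)) (T (Q e))) | P Q. P \<in> bandsB E e U \<and> Q \<in> bandsB E e V}"

end

theory Submission
  imports Defs "HOL-Library.Lattice_Algebras"
begin

(* Put h = UVg - Tg. Compatibility gives Th = 0, hence T|h| = 2 T h^+. The positive part is
   h^+ = p h for the component p = P_{h^+} e, which lies in R(U), and compatible conditional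
   expectations can be moved across T: T(p UVg) = T(Vp g) and T(p Tg) = T(Tp g). Thus
   T h^+ = T((Vp - Tp) g) <= ||g||_{T,oo} T|Vp - Tp|. Repeating the argument with u = Vp - Tp,
   Tu = 0, and its component q = P_{u^+} e in R(V) gives T u^+ = T(pq) - Tp Tq <= alpha_T(U,V),
   so T|u| <= 2 alpha_T(U,V). Behind this are two facts about the universal completion that are
   proved by approximating k with its spectral components: the f-algebra is commutative, and
   T(k f) = k Tf for every k in R(T). *)

section \<open>Positive parts and absolute values\<close>

text \<open>The sort \<open>{ordered_real_vector, lattice}\<close> is not a class, so the library facts on
  lattice-ordered groups are obtained by interpretation.\<close>

interpretation riesz: lattice_ab_group_add "(+)" "0::'a::{ordered_real_vector,lattice}" "(-)" uminus "(\<le>)" "(<)" inf sup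
  by unfold_locales

lemma le_pprt: "x \<le> riesz.pprt x"
  by (simp add: riesz.pprt_def)

lemma pprt_diff_pprt_uminus: "riesz.pprt x - riesz.pprt (- x) = x"
  using riesz.prts[of x] by (simp add: riesz.pprt_neg)

lemma rabs_ge_0 [simp]: "0 \<le> rabs x"
proof -
  have "x + - x \<le> rabs x + rabs x"
    unfolding rabs_def by (intro add_mono) simp_all
  then show ?thesis
    by simp
qed

lemma sup_pprt_pprt_uminus: "sup (riesz.pprt x) (riesz.pprt (- x)) = rabs x"
proof -
  have "sup (riesz.pprt x) (riesz.pprt (- x)) = sup (rabs x) 0"
    by (simp add: riesz.pprt_def rabs_def sup_aci)
  then show ?thesis
    by (simp add: sup_absorb1)
qed

lemma rabs_eq_pprt_add_pprt_uminus: "rabs x = riesz.pprt x + riesz.pprt (- x)"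
proof -
  have "riesz.pprt x + riesz.pprt (- x) = sup (x + riesz.pprt (- x)) (riesz.pprt (- x))"
    by (simp add: riesz.pprt_def riesz.add_sup_distrib_right)
  also have "x + riesz.pprt (- x) = riesz.pprt x"
    using pprt_diff_pprt_uminus[of x] by (simp add: algebra_simps)
  finally show ?thesis
    by (simp add: sup_pprt_pprt_uminus)
qed

lemma inf_pprt_pprt_uminus: "inf (riesz.pprt x) (riesz.pprt (- x)) = 0"
  using riesz.add_eq_inf_sup[of "riesz.pprt x" "riesz.pprt (- x)"]
  by (simp add: sup_pprt_pprt_uminus flip: rabs_eq_pprt_add_pprt_uminus)

lemma pprt_le_rabs: "riesz.pprt x \<le> rabs x"
  by (simp add: rabs_eq_pprt_add_pprt_uminus)

lemma pprt_uminus_le_rabs: "riesz.pprt (- x) \<le> rabs x"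
  by (simp add: rabs_eq_pprt_add_pprt_uminus)

lemma rabs_le_iff: "rabs x \<le> y \<longleftrightarrow> x \<le> y \<and> - x \<le> y"
  by (simp add: rabs_def)

lemma le_rabs: "x \<le> rabs x" "- x \<le> rabs x"
  by (simp_all add: rabs_def)

lemma rabs_uminus [simp]: "rabs (- x) = rabs x"
  by (simp add: rabs_def sup_commute)

lemma rabs_of_nonneg [simp]: "0 \<le> x \<Longrightarrow> rabs x = x"
  by (simp add: rabs_eq_pprt_add_pprt_uminus)

lemma rabs_le_0_iff [simp]: "rabs x \<le> 0 \<longleftrightarrow> x = 0"
  by (auto simp: rabs_le_iff intro: order.antisym)

lemma rabs_triangle: "rabs (x + y) \<le> rabs x + rabs y"
  using add_mono[OF le_rabs(1)[of x] le_rabs(1)[of y]] add_mono[OF le_rabs(2)[of x] le_rabs(2)[of y]]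
  by (simp add: rabs_le_iff)

lemma rabs_diff_le: "rabs (x - y) \<le> rabs x + rabs y"
  using rabs_triangle[of x "- y"] by simp

lemma rabs_diff_le_of_between:
  assumes "0 \<le> a" "a \<le> c" "0 \<le> b" "b \<le> c"
  shows "rabs (a - b) \<le> c"
  using assms by (auto simp: rabs_le_iff intro: order_trans[of _ a] order_trans[of _ b])

lemma scaleR_inf_distrib:
  fixes a b :: "'a::{ordered_real_vector,lattice}"
  assumes "0 \<le> c"
  shows "c *\<^sub>R inf a b = inf (c *\<^sub>R a) (c *\<^sub>R b)"
proof (cases "c = 0")
  case False
  with assms have c: "0 < c" by simp
  show ?thesis
  proof (rule order.antisym)
    show "c *\<^sub>R inf a b \<le> inf (c *\<^sub>R a) (c *\<^sub>R b)"
      using assms by (simp add: scaleR_left_mono)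
    have "(1 / c) *\<^sub>R inf (c *\<^sub>R a) (c *\<^sub>R b) \<le> inf a b"
      using c scaleR_left_mono[of "inf (c *\<^sub>R a) (c *\<^sub>R b)" "c *\<^sub>R a" "1 / c"]
        scaleR_left_mono[of "inf (c *\<^sub>R a) (c *\<^sub>R b)" "c *\<^sub>R b" "1 / c"]
      by simp
    then have "c *\<^sub>R ((1 / c) *\<^sub>R inf (c *\<^sub>R a) (c *\<^sub>R b)) \<le> c *\<^sub>R inf a b"
      using c by (intro scaleR_left_mono) simp_all
    then show "inf (c *\<^sub>R a) (c *\<^sub>R b) \<le> c *\<^sub>R inf a b"
      using c by simp
  qed
qed simp

lemma scaleR_sup_distrib:
  fixes a b :: "'a::{ordered_real_vector,lattice}"
  assumes "0 \<le> c"
  shows "c *\<^sub>R sup a b = sup (c *\<^sub>R a) (c *\<^sub>R b)"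
proof -
  have "c *\<^sub>R sup a b = - (c *\<^sub>R inf (- a) (- b))"
    by (simp only: riesz.sup_eq_neg_inf scaleR_minus_right)
  also have "\<dots> = - inf (- (c *\<^sub>R a)) (- (c *\<^sub>R b))"
    by (simp only: scaleR_inf_distrib[OF assms] scaleR_minus_right)
  finally show ?thesis
    by (simp only: riesz.neg_inf_eq_sup minus_minus)
qed

lemma scaleR_pprt: "0 \<le> c \<Longrightarrow> c *\<^sub>R riesz.pprt x = riesz.pprt (c *\<^sub>R x)"
  by (simp add: riesz.pprt_def scaleR_sup_distrib)

lemma diff_inf_eq_pprt: "x - inf x y = riesz.pprt (x - y)"
  by (simp add: riesz.diff_inf_eq_sup riesz.pprt_def riesz.add_sup_distrib_left sup_commute)

lemma disjoint_mono:
  fixes a b c d :: "'a::{ordered_real_vector,lattice}"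
  assumes "inf a b = 0" "0 \<le> c" "c \<le> a" "0 \<le> d" "d \<le> b"
  shows "inf c d = 0"
proof -
  have "inf c d \<le> inf a b"
    using assms(3,5) by (rule inf_mono)
  with assms show ?thesis
    by (simp add: order.antisym)
qed

lemma disjoint_add_right:
  fixes u v w :: "'a::{ordered_real_vector,lattice}"
  assumes "0 \<le> u" "0 \<le> v" "0 \<le> w" "inf u v = 0" "inf u w = 0"
  shows "inf u (v + w) = 0"
proof -
  have "inf u (v + w) \<le> inf (u + w) (v + w)"
    using assms by (auto intro: le_infI1 simp: add_increasing2)
  also have "\<dots> = inf u v + w"
    by (rule riesz.add_inf_distrib_right[symmetric])
  also have "\<dots> = w"
    using assms(4) by simp
  finally have "inf u (v + w) \<le> inf u w"
    by simp
  with assms show ?thesis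
    by (simp add: order.antisym add_nonneg_nonneg)
qed

lemma disjoint_scaleR_left:
  fixes r z :: "'a::{ordered_real_vector,lattice}"
  assumes "0 \<le> r" "0 \<le> z" "inf r z = 0" "0 \<le> c"
  shows "inf (c *\<^sub>R r) z = 0"
proof -
  define m where "m = max 1 c"
  have m: "1 \<le> m" "c \<le> m"
    by (auto simp: m_def)
  have "c *\<^sub>R r \<le> m *\<^sub>R r" "1 *\<^sub>R z \<le> m *\<^sub>R z"
    using m assms by (intro scaleR_right_mono; simp)+
  then have "inf (c *\<^sub>R r) z \<le> inf (m *\<^sub>R r) (m *\<^sub>R z)"
    by (intro inf_mono) simp_all
  also have "\<dots> = 0"
    using m assms by (simp flip: scaleR_inf_distrib)
  finally show ?thesis
    using assms by (auto intro: order.antisym simp: scaleR_nonneg_nonneg)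
qed

lemma pprt_diff_of_disjoint:
  fixes u v :: "'a::{ordered_real_vector,lattice}"
  assumes "inf u v = 0"
  shows "riesz.pprt (u - v) = u"
proof -
  have "riesz.pprt (u - v) = sup (u - v) (v - v)"
    by (simp add: riesz.pprt_def)
  also have "\<dots> = sup u v - v"
    using riesz.add_sup_distrib_right[of u v "- v"] by (simp only: diff_conv_add_uminus)
  also have "sup u v = u + v"
    using riesz.add_eq_inf_sup[of u v] assms by simp
  finally show ?thesis
    by simp
qed

lemma rabs_diff_of_disjoint:
  fixes u v :: "'a::{ordered_real_vector,lattice}"
  assumes "inf u v = 0"
  shows "rabs (u - v) = u + v"
  using pprt_diff_of_disjoint[OF assms] pprt_diff_of_disjoint[of v u] assms
  by (simp add: rabs_eq_pprt_add_pprt_uminus inf_commute)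

lemma rabs_add_of_disjoint:
  fixes a b :: "'a::{ordered_real_vector,lattice}"
  assumes disj: "inf (rabs a) (rabs b) = 0"
  shows "rabs (a + b) = rabs a + rabs b"
proof -
  let ?P = "riesz.pprt a + riesz.pprt b" and ?N = "riesz.pprt (- a) + riesz.pprt (- b)"
  have cross: "inf (riesz.pprt a) (riesz.pprt (- b)) = 0" "inf (riesz.pprt b) (riesz.pprt (- a)) = 0"
    using disjoint_mono[OF disj] disjoint_mono[OF disj[unfolded inf_commute[of "rabs a"]]]
    by (simp_all add: pprt_le_rabs pprt_uminus_le_rabs)
  have "inf (riesz.pprt a) ?N = 0" "inf (riesz.pprt b) ?N = 0"
    using cross by (auto intro!: disjoint_add_right simp: inf_pprt_pprt_uminus inf_commute)
  then have "inf ?N ?P = 0"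
    by (intro disjoint_add_right) (simp_all add: add_nonneg_nonneg inf_commute)
  then have "rabs (?P - ?N) = ?P + ?N"
    by (simp add: rabs_diff_of_disjoint inf_commute)
  moreover have "?P - ?N = a + b"
    using pprt_diff_pprt_uminus[of a] pprt_diff_pprt_uminus[of b] by (simp add: algebra_simps)
  ultimately show ?thesis
    by (simp add: rabs_eq_pprt_add_pprt_uminus algebra_simps)
qed

lemma diff_inf_ge_of_disjoint:
  fixes a z s :: "'a::{ordered_real_vector,lattice}"
  assumes "inf a z = 0" "a \<le> s"
  shows "a \<le> s - inf s z"
proof -
  have "a = riesz.pprt (a - z)"
    using assms(1) by (simp add: pprt_diff_of_disjoint)
  also have "\<dots> \<le> riesz.pprt (s - z)"
    using assms(2) by (simp add: diff_right_mono)
  finally show ?thesis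
    by (simp only: diff_inf_eq_pprt)
qed

lemma disjoint_sup:
  fixes s z :: "'a::{ordered_real_vector,lattice}"
  assumes "is_sup_in UNIV A s" "0 \<le> s" "0 \<le> z" "\<And>a. a \<in> A \<Longrightarrow> inf a z = 0"
  shows "inf s z = 0"
proof -
  have "a \<le> s - inf s z" if "a \<in> A" for a
    using that assms by (intro diff_inf_ge_of_disjoint) (auto simp: is_sup_in_def)
  then have "s \<le> s - inf s z"
    using assms(1) unfolding is_sup_in_def by blast
  then have "inf s z \<le> 0"
    by (simp only: le_diff_eq add_le_same_cancel1)
  then show ?thesis
    using assms(2,3) by (simp add: order.antisym)
qed

lemma is_sup_in_unique: "is_sup_in S A s \<Longrightarrow> is_sup_in S A t \<Longrightarrow> s = t"
  unfolding is_sup_in_def by (meson order.antisym)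

lemma is_inf_in_unique: "is_inf_in S A s \<Longrightarrow> is_inf_in S A t \<Longrightarrow> s = t"
  unfolding is_inf_in_def by (meson order.antisym)

lemma sup_in_eq: "is_sup_in S A s \<Longrightarrow> sup_in S A = s"
  unfolding sup_in_def by (blast intro: is_sup_in_unique)

lemma inf_in_eq: "is_inf_in S A s \<Longrightarrow> inf_in S A = s"
  unfolding inf_in_def by (blast intro: is_inf_in_unique)

section \<open>Unital f-algebras and their components\<close>

definition is_component :: "'a::{ordered_real_vector,lattice} \<Rightarrow> 'a \<Rightarrow> bool" where
  "is_component e c \<longleftrightarrow> 0 \<le> c \<and> c \<le> e \<and> inf c (e - c) = 0"

lemma is_componentD:
  assumes "is_component e c"
  shows "0 \<le> c" "c \<le> e" "0 \<le> e - c" "inf c (e - c) = 0"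
  using assms by (simp_all add: is_component_def)

lemma is_component_complement: "is_component e c \<Longrightarrow> is_component e (e - c)"
  by (simp add: is_component_def inf_commute)

locale unital_f_algebra =
  fixes mul :: "'a::{ordered_real_vector,lattice} \<Rightarrow> 'a \<Rightarrow> 'a" and e :: 'a
  assumes f_algebra: "f_algebra_unit mul e"
begin

lemma mul_add_left: "mul (x + y) z = mul x z + mul y z"
  and mul_add_right: "mul x (y + z) = mul x y + mul x z"
  and mul_scaleR_left: "mul (c *\<^sub>R x) y = c *\<^sub>R mul x y"
  and mul_scaleR_right: "mul x (c *\<^sub>R y) = c *\<^sub>R mul x y"
  and mul_assoc: "mul (mul x y) z = mul x (mul y z)"
  and mul_nonneg: "0 \<le> x \<Longrightarrow> 0 \<le> y \<Longrightarrow> 0 \<le> mul x y"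
  and mul_unit_left [simp]: "mul e x = x"
  and mul_unit_right [simp]: "mul x e = x"
  using f_algebra by (simp_all add: f_algebra_unit_def)

lemma disjoint_mul_left: "inf x y = 0 \<Longrightarrow> 0 \<le> z \<Longrightarrow> inf (mul z x) y = 0"
  and disjoint_mul_right: "inf x y = 0 \<Longrightarrow> 0 \<le> z \<Longrightarrow> inf (mul x z) y = 0"
  using f_algebra unfolding f_algebra_unit_def by blast+

lemma mul_zero_left [simp]: "mul 0 x = 0"
  using mul_scaleR_left[of 0 0 x] by simp

lemma mul_zero_right [simp]: "mul x 0 = 0"
  using mul_scaleR_right[of x 0 0] by simp

lemma mul_uminus_right: "mul x (- y) = - mul x y"
  using mul_scaleR_right[of x "- 1" y] by simp

lemma mul_diff_left: "mul (x - y) z = mul x z - mul y z"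
  using mul_add_left[of x "- y" z] mul_scaleR_left[of "- 1" y z] by simp

lemma mul_diff_right: "mul x (y - z) = mul x y - mul x z"
  using mul_add_right[of x y "- z"] mul_scaleR_right[of x "- 1" z] by simp

lemma mul_mono_left: "0 \<le> z \<Longrightarrow> x \<le> y \<Longrightarrow> mul x z \<le> mul y z"
  using mul_nonneg[of "y - x" z] by (simp add: mul_diff_left)

lemma mul_mono_right: "0 \<le> z \<Longrightarrow> x \<le> y \<Longrightarrow> mul z x \<le> mul z y"
  using mul_nonneg[of z "y - x"] by (simp add: mul_diff_right)

lemma mul_eq_0_of_disjoint:
  assumes "0 \<le> x" "0 \<le> y" "inf x y = 0"
  shows "mul x y = 0"
proof -
  have "inf x (mul x y) = 0"
    using disjoint_mul_left[of y x x] assms by (simp add: inf_commute)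
  then have "inf (mul x y) (mul x y) = 0"
    using disjoint_mul_right[of x "mul x y" y] assms by simp
  then show ?thesis
    by simp
qed

lemma eq_0_of_disjoint_unit:
  assumes "0 \<le> w" "inf w e = 0"
  shows "w = 0"
  using disjoint_mul_left[of e w w] assms by (simp add: inf_commute)

lemma mul_pprt_split_left: "mul x y = mul (riesz.pprt x) y - mul (riesz.pprt (- x)) y"
  by (simp add: pprt_diff_pprt_uminus flip: mul_diff_left)

lemma mul_pprt_split_right: "mul x y = mul x (riesz.pprt y) - mul x (riesz.pprt (- y))"
  by (simp add: pprt_diff_pprt_uminus flip: mul_diff_right)

lemma
  assumes "0 \<le> z"
  shows rabs_mul_nonneg_left: "rabs (mul z x) = mul z (rabs x)"
    and pprt_mul_nonneg_left: "riesz.pprt (mul z x) = mul z (riesz.pprt x)"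
proof -
  have "inf (riesz.pprt (- x)) (mul z (riesz.pprt x)) = 0"
    using disjoint_mul_left[OF inf_pprt_pprt_uminus assms] by (simp add: inf_commute)
  then have disj: "inf (mul z (riesz.pprt x)) (mul z (riesz.pprt (- x))) = 0"
    using disjoint_mul_left[of "riesz.pprt (- x)" _ z] assms by (simp add: inf_commute)
  have "mul z x = mul z (riesz.pprt x) - mul z (riesz.pprt (- x))"
    by (rule mul_pprt_split_right)
  then show "rabs (mul z x) = mul z (rabs x)" "riesz.pprt (mul z x) = mul z (riesz.pprt x)"
    using rabs_diff_of_disjoint[OF disj] pprt_diff_of_disjoint[OF disj]
    by (simp_all add: rabs_eq_pprt_add_pprt_uminus[of x] mul_add_right)
qed

lemma rabs_mul: "rabs (mul x y) = mul (rabs x) (rabs y)"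
proof -
  have "inf (riesz.pprt (- x)) (mul (riesz.pprt x) (rabs y)) = 0"
    using disjoint_mul_right[OF inf_pprt_pprt_uminus rabs_ge_0] by (simp add: inf_commute)
  then have "inf (mul (riesz.pprt (- x)) (rabs y)) (mul (riesz.pprt x) (rabs y)) = 0"
    using disjoint_mul_right by simp
  then have "rabs (mul (riesz.pprt x) y - mul (riesz.pprt (- x)) y)
      = rabs (mul (riesz.pprt x) y) + rabs (mul (riesz.pprt (- x)) y)"
    using rabs_add_of_disjoint[of "mul (riesz.pprt x) y" "- mul (riesz.pprt (- x)) y"]
    by (simp add: rabs_mul_nonneg_left inf_commute)
  then show ?thesis
    by (simp add: rabs_mul_nonneg_left rabs_eq_pprt_add_pprt_uminus[of x] mul_add_left
        flip: mul_pprt_split_left)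
qed

lemma mul_le_rabs_mul_rabs: "mul x y \<le> mul (rabs x) (rabs y)"
  using le_rabs(1)[of "mul x y"] by (simp add: rabs_mul)

lemma mul_sup_right:
  assumes "0 \<le> z"
  shows "mul z (sup x y) = sup (mul z x) (mul z y)"
proof -
  have "sup x y = y + riesz.pprt (x - y)" "sup (mul z x) (mul z y) = mul z y + riesz.pprt (mul z x - mul z y)"
    by (simp_all add: riesz.pprt_def riesz.add_sup_distrib_left)
  then show ?thesis
    using pprt_mul_nonneg_left[OF assms, of "x - y"] by (simp add: mul_add_right mul_diff_right)
qed

lemma mul_inf_right:
  assumes "0 \<le> z"
  shows "mul z (inf x y) = inf (mul z x) (mul z y)"
proof -
  have "mul z (inf x y) = - mul z (sup (- x) (- y))"
    by (simp only: riesz.inf_eq_neg_sup mul_uminus_right)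
  also have "\<dots> = inf (mul z x) (mul z y)"
    by (simp only: mul_sup_right[OF assms] mul_uminus_right riesz.neg_sup_eq_inf minus_minus)
  finally show ?thesis .
qed

lemma mul_component_complement:
  assumes "is_component e c"
  shows "mul c (e - c) = 0" "mul (e - c) c = 0"
  using mul_eq_0_of_disjoint[of c "e - c"] mul_eq_0_of_disjoint[of "e - c" c] is_componentD[OF assms]
  by (simp_all add: inf_commute)

lemma mul_component_le:
  assumes "is_component e c" "0 \<le> x"
  shows "mul c x \<le> x" "0 \<le> mul c x"
  using mul_mono_left[OF assms(2) is_componentD(2)[OF assms(1)]] mul_nonneg[OF is_componentD(1)[OF assms(1)] assms(2)]
  by simp_all

lemma mul_component_commute_nonneg:
  assumes "is_component e c" "0 \<le> x"
  shows "mul c x = mul x c"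
proof -
  note c = is_componentD[OF assms(1)]
  have "inf (mul x c) (e - c) = 0" "inf (mul c x) (e - c) = 0"
    using disjoint_mul_left[OF c(4) assms(2)] disjoint_mul_right[OF c(4) assms(2)] by simp_all
  then have z1: "mul (e - c) (mul x c) = 0" and z2: "mul (mul c x) (e - c) = 0"
    using mul_eq_0_of_disjoint c assms(2) mul_nonneg by (simp_all add: inf_commute)
  have "mul x c = mul (c + (e - c)) (mul x c)"
    by simp
  also have "\<dots> = mul c (mul x c)"
    by (simp only: mul_add_left z1 add_0_right)
  moreover have "mul c x = mul (mul c x) (c + (e - c))"
    by simp
  then have "mul c x = mul (mul c x) c"
    by (simp only: mul_add_right z2 add_0_right)
  then have "mul c x = mul c (mul x c)"
    by (simp only: mul_assoc)
  ultimately show ?thesis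
    by simp
qed

lemma mul_component_commute:
  assumes "is_component e c"
  shows "mul c x = mul x c"
proof -
  have "mul c x = mul c (riesz.pprt x) - mul c (riesz.pprt (- x))"
    by (rule mul_pprt_split_right)
  also have "\<dots> = mul (riesz.pprt x) c - mul (riesz.pprt (- x)) c"
    by (simp only: mul_component_commute_nonneg[OF assms riesz.zero_le_pprt])
  also have "\<dots> = mul x c"
    by (rule mul_pprt_split_left[symmetric])
  finally show ?thesis .
qed

lemma mul_components:
  assumes "is_component e c" "is_component e d"
  shows "mul c d = inf c d"
proof (rule order.antisym)
  note c = is_componentD[OF assms(1)] and d = is_componentD[OF assms(2)]
  show "mul c d \<le> inf c d"
    using mul_mono_right[OF c(1) d(2)] mul_mono_left[OF d(1) c(2)] by simp
  have "mul (e - c) (inf c d) \<le> mul (e - c) c"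
    using c by (intro mul_mono_right) simp_all
  then have z: "mul (e - c) (inf c d) = 0"
    using mul_component_complement(2)[OF assms(1)] mul_nonneg[OF c(3), of "inf c d"] c(1) d(1)
    by (intro order.antisym) simp_all
  have "inf c d = mul (c + (e - c)) (inf c d)"
    by simp
  also have "\<dots> = mul c (inf c d)"
    by (simp only: mul_add_left z add_0_right)
  also have "\<dots> \<le> mul c d"
    using c by (intro mul_mono_right) simp_all
  finally show "inf c d \<le> mul c d" .
qed

lemma is_component_inf:
  assumes "is_component e c" "is_component e d"
  shows "is_component e (inf c d)"
proof -
  note c = is_componentD[OF assms(1)] and d = is_componentD[OF assms(2)]
  have "inf (inf c d) (e - c) = 0" "inf (inf c d) (e - d) = 0"
    using disjoint_mono[OF c(4)] disjoint_mono[OF d(4)] c d by simp_all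
  then have disj: "inf (inf c d) ((e - c) + (e - d)) = 0"
    using c d by (intro disjoint_add_right) simp_all
  have le: "e - inf c d \<le> (e - c) + (e - d)"
    using c d by (simp add: riesz.add_sup_distrib_left add_increasing add_increasing2)
  have "inf c d \<le> e"
    using c by (simp add: le_infI1)
  then have "inf (inf c d) (e - inf c d) = 0"
    using c d by (intro disjoint_mono[OF disj _ order_refl _ le]) (simp_all del: riesz.diff_inf_eq_sup)
  with \<open>inf c d \<le> e\<close> show ?thesis
    using c d by (simp add: is_component_def)
qed

lemma
  assumes "is_component e c" "is_component e d" "d \<le> c"
  shows diff_components_eq_mul: "c - d = mul c (e - d)"
    and is_component_diff: "is_component e (c - d)"
proof -
  have "mul c d = d"
    using mul_components[OF assms(1,2)] assms(3) by (simp add: inf_absorb2)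
  then show eq: "c - d = mul c (e - d)"
    by (simp add: mul_diff_right)
  show "is_component e (c - d)"
    using eq is_component_inf[OF assms(1) is_component_complement[OF assms(2)]]
      mul_components[OF assms(1) is_component_complement[OF assms(2)]]
    by simp
qed

end

section \<open>Dedekind complete unital f-algebras\<close>

locale complete_unital_f_algebra = unital_f_algebra mul e
  for mul :: "'a::{ordered_real_vector,lattice} \<Rightarrow> 'a \<Rightarrow> 'a" and e +
  assumes dedekind_complete: "dedekind_complete_on (UNIV :: 'a set)"
    and unit_nonneg: "0 \<le> e"
begin

lemma bounded_has_sup:
  fixes A :: "'a set"
  assumes "A \<noteq> {}" "\<And>a. a \<in> A \<Longrightarrow> a \<le> b"
  shows "\<exists>s. is_sup_in UNIV A s"
proof -
  have "A \<subseteq> UNIV \<and> A \<noteq> {} \<and> (\<exists>b\<in>UNIV. \<forall>a\<in>A. a \<le> b)"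
    using assms by blast
  from dedekind_complete[unfolded dedekind_complete_on_def, rule_format, OF this] show ?thesis
    by simp
qed

lemma archimedean:
  fixes x y :: 'a
  assumes "\<And>n::nat. real n *\<^sub>R x \<le> y"
  shows "x \<le> 0"
proof -
  define A where "A = range (\<lambda>n::nat. real n *\<^sub>R riesz.pprt x)"
  have "a \<le> riesz.pprt y" if "a \<in> A" for a
    using that assms by (auto simp: A_def scaleR_pprt)
  then obtain s where s: "is_sup_in UNIV A s"
    using bounded_has_sup[of A] by (auto simp: A_def)
  have "a \<le> s - riesz.pprt x" if "a \<in> A" for a
  proof -
    obtain n where a: "a = real n *\<^sub>R riesz.pprt x"
      using \<open>a \<in> A\<close> by (auto simp: A_def)
    have "real (Suc n) *\<^sub>R riesz.pprt x \<in> A"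
      unfolding A_def by (rule rangeI)
    then have "real (Suc n) *\<^sub>R riesz.pprt x \<le> s"
      using s unfolding is_sup_in_def by blast
    then show ?thesis
      by (simp add: a algebra_simps le_diff_eq)
  qed
  then have "s \<le> s - riesz.pprt x"
    using s by (simp add: is_sup_in_def)
  then have "riesz.pprt x = 0"
    by (intro order.antisym) simp_all
  then show "x \<le> 0"
    using le_pprt[of x] by simp
qed

lemma archimedean_inverse:
  fixes x y :: 'a
  assumes "\<And>n::nat. n \<ge> 1 \<Longrightarrow> x \<le> (1 / real n) *\<^sub>R y"
  shows "x \<le> 0"
proof (rule archimedean)
  fix n :: nat
  show "real n *\<^sub>R x \<le> riesz.pprt y"
  proof (cases "n = 0")
    case False
    then have "real n *\<^sub>R x \<le> real n *\<^sub>R ((1 / real n) *\<^sub>R y)"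
      using assms by (intro scaleR_left_mono) simp_all
    also have "\<dots> = y"
      using False by simp
    finally show ?thesis
      using le_pprt[of y] by (rule order_trans)
  qed simp
qed

text \<open>Freudenthal's formula for \<open>P\<^sub>x\<^sub>+ e\<close>, the component of \<open>e\<close> in the band generated by \<open>x\<^sup>+\<close>.\<close>

definition pos_component :: "'a \<Rightarrow> 'a" where
  "pos_component x = sup_in UNIV (range (\<lambda>n::nat. inf (real n *\<^sub>R riesz.pprt x) e))"

lemma pos_component_is_sup:
  "is_sup_in UNIV (range (\<lambda>n::nat. inf (real n *\<^sub>R riesz.pprt x) e)) (pos_component x)"
proof -
  obtain s where "is_sup_in UNIV (range (\<lambda>n::nat. inf (real n *\<^sub>R riesz.pprt x) e)) s"
    using bounded_has_sup[of "range (\<lambda>n::nat. inf (real n *\<^sub>R riesz.pprt x) e)" e] by force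
  then show ?thesis
    by (simp add: pos_component_def sup_in_eq)
qed

lemma pos_component_upper: "inf (real n *\<^sub>R riesz.pprt x) e \<le> pos_component x"
  using pos_component_is_sup[of x] by (auto simp: is_sup_in_def)

lemma pos_component_least: "(\<And>n::nat. inf (real n *\<^sub>R riesz.pprt x) e \<le> b) \<Longrightarrow> pos_component x \<le> b"
  using pos_component_is_sup[of x] by (auto simp: is_sup_in_def)

lemma pos_component_nonneg: "0 \<le> pos_component x"
  using pos_component_upper[of 0 x] unit_nonneg by (simp add: inf_absorb1)

lemma pos_component_le_unit: "pos_component x \<le> e"
  by (rule pos_component_least) simp

lemma pprt_disjoint_complement_pos_component: "inf (riesz.pprt x) (e - pos_component x) = 0"
proof -
  define y where "y = inf (riesz.pprt x) (e - pos_component x)"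
  have "real n *\<^sub>R y \<le> e" for n :: nat
  proof (induction n)
    case (Suc n)
    have "real n *\<^sub>R y \<le> real n *\<^sub>R riesz.pprt x"
      by (rule scaleR_left_mono) (auto simp: y_def)
    with Suc have "real n *\<^sub>R y \<le> inf (real n *\<^sub>R riesz.pprt x) e"
      by simp
    also have "\<dots> \<le> pos_component x"
      by (rule pos_component_upper)
    finally have "real n *\<^sub>R y + y \<le> pos_component x + (e - pos_component x)"
      by (intro add_mono) (simp_all add: y_def)
    then show ?case
      by (simp add: algebra_simps)
  qed (simp add: unit_nonneg)
  then have "y \<le> 0"
    by (rule archimedean)
  then show ?thesis
    using pos_component_le_unit[of x] by (intro order.antisym) (simp_all add: y_def)
qed

lemma disjoint_pos_component:
  assumes "0 \<le> z" "inf (riesz.pprt x) z = 0"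
  shows "inf (pos_component x) z = 0"
proof (rule disjoint_sup[OF pos_component_is_sup pos_component_nonneg assms(1)])
  fix a
  assume "a \<in> range (\<lambda>n::nat. inf (real n *\<^sub>R riesz.pprt x) e)"
  then obtain n :: nat where a: "a = inf (real n *\<^sub>R riesz.pprt x) e"
    by blast
  have "inf (real n *\<^sub>R riesz.pprt x) z = 0"
    using assms by (intro disjoint_scaleR_left) simp_all
  then show "inf a z = 0"
    unfolding a by (rule disjoint_mono) (simp_all add: assms(1) unit_nonneg scaleR_nonneg_nonneg)
qed

lemma is_component_pos_component: "is_component e (pos_component x)"
  using disjoint_pos_component[OF _ pprt_disjoint_complement_pos_component] pos_component_le_unit[of x]
    pos_component_nonneg[of x]
  by (simp add: is_component_def)

lemma mul_pos_component: "mul (pos_component x) x = riesz.pprt x"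
proof -
  have "mul (e - pos_component x) (riesz.pprt x) = 0"
    using pprt_disjoint_complement_pos_component[of x] pos_component_le_unit[of x]
    by (intro mul_eq_0_of_disjoint) (simp_all add: inf_commute)
  then have "mul (pos_component x) (riesz.pprt x) = riesz.pprt x"
    using mul_add_left[of "pos_component x" "e - pos_component x" "riesz.pprt x"] by simp
  moreover have "mul (pos_component x) (riesz.pprt (- x)) = 0"
    using disjoint_pos_component[OF riesz.zero_le_pprt inf_pprt_pprt_uminus] pos_component_nonneg
    by (intro mul_eq_0_of_disjoint) simp_all
  ultimately show ?thesis
    using mul_pprt_split_right[of "pos_component x" x] by simp
qed

lemma mul_complement_pos_component: "mul (e - pos_component x) x = - riesz.pprt (- x)"
  using pprt_diff_pprt_uminus[of x] by (simp add: mul_diff_left mul_pos_component algebra_simps)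

lemma pos_component_mono:
  assumes "riesz.pprt x \<le> riesz.pprt y"
  shows "pos_component x \<le> pos_component y"
proof (rule pos_component_least)
  fix n :: nat
  have "inf (real n *\<^sub>R riesz.pprt x) e \<le> inf (real n *\<^sub>R riesz.pprt y) e"
    using assms by (intro inf_mono scaleR_left_mono) simp_all
  also have "\<dots> \<le> pos_component y"
    by (rule pos_component_upper)
  finally show "inf (real n *\<^sub>R riesz.pprt x) e \<le> pos_component y" .
qed

lemma pos_component_eq_unit:
  assumes "e \<le> real m *\<^sub>R riesz.pprt x"
  shows "pos_component x = e"
  using pos_component_upper[of m x] pos_component_le_unit[of x] assms
  by (simp add: inf_absorb2)

text \<open>\<open>spectral_component k t\<close> is the component of \<open>e\<close> on which \<open>k > t e\<close>.\<close>

definition spectral_component :: "'a \<Rightarrow> real \<Rightarrow> 'a" where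
  "spectral_component k t = pos_component (k - t *\<^sub>R e)"

lemma is_component_spectral_component: "is_component e (spectral_component k t)"
  by (simp add: spectral_component_def is_component_pos_component)

lemma scaleR_spectral_component_le: "t *\<^sub>R spectral_component k t \<le> mul (spectral_component k t) k"
proof -
  have "mul (spectral_component k t) k - t *\<^sub>R spectral_component k t = riesz.pprt (k - t *\<^sub>R e)"
    by (simp add: spectral_component_def mul_pos_component[symmetric] mul_diff_right mul_scaleR_right)
  then show ?thesis
    by (metis riesz.zero_le_pprt diff_ge_0_iff_ge)
qed

lemma mul_complement_spectral_component_le:
  "mul (e - spectral_component k t) k \<le> t *\<^sub>R (e - spectral_component k t)"
proof -
  have "mul (e - spectral_component k t) k - t *\<^sub>R (e - spectral_component k t) = - riesz.pprt (- (k - t *\<^sub>R e))"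
    by (simp add: spectral_component_def mul_complement_pos_component[symmetric] mul_diff_right
        mul_scaleR_right del: minus_diff_eq)
  then show ?thesis
    by (metis riesz.zero_le_pprt neg_le_0_iff_le diff_le_0_iff_le)
qed

lemma spectral_component_antimono:
  assumes "s \<le> t"
  shows "spectral_component k t \<le> spectral_component k s"
proof -
  have "s *\<^sub>R e \<le> t *\<^sub>R e"
    using assms unit_nonneg by (rule scaleR_right_mono)
  then show ?thesis
    unfolding spectral_component_def by (intro pos_component_mono riesz.pprt_mono) simp
qed

lemma spectral_layer:
  fixes k :: 'a
  assumes "s \<le> t"
  defines "r \<equiv> spectral_component k s - spectral_component k t"
  shows "is_component e r" "s *\<^sub>R r \<le> mul r k" "mul r k \<le> t *\<^sub>R r"
proof -
  note components = is_component_spectral_component[of k s] is_component_spectral_component[of k t]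
    spectral_component_antimono[OF assms(1), of k]
  show "is_component e r"
    unfolding r_def using components by (rule is_component_diff)
  have r: "r = mul (spectral_component k s) (e - spectral_component k t)"
    unfolding r_def using components by (rule diff_components_eq_mul)
  have "mul r k = mul (spectral_component k s) (mul (e - spectral_component k t) k)"
    by (simp only: r mul_assoc)
  also have "\<dots> \<le> mul (spectral_component k s) (t *\<^sub>R (e - spectral_component k t))"
    using components by (intro mul_mono_right mul_complement_spectral_component_le is_componentD(1))
  also have "\<dots> = t *\<^sub>R r"
    by (simp only: mul_scaleR_right r)
  finally show "mul r k \<le> t *\<^sub>R r" .
  have r': "r = mul (e - spectral_component k t) (spectral_component k s)"
    using r mul_component_commute[OF is_component_complement[OF components(2)]] by simp
  have "s *\<^sub>R r = mul (e - spectral_component k t) (s *\<^sub>R spectral_component k s)"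
    by (simp only: r' mul_scaleR_right)
  also have "\<dots> \<le> mul (e - spectral_component k t) (mul (spectral_component k s) k)"
    using components by (intro mul_mono_right scaleR_spectral_component_le is_componentD(3))
  also have "\<dots> = mul r k"
    by (simp only: r' mul_assoc)
  finally show "s *\<^sub>R r \<le> mul r k" .
qed

lemma spectral_component_le:
  assumes "0 \<le> k" "0 < t"
  shows "spectral_component k t \<le> (1 / t) *\<^sub>R k"
proof -
  have "t *\<^sub>R spectral_component k t \<le> k"
    using scaleR_spectral_component_le mul_component_le(1)[OF is_component_spectral_component assms(1)]
    by (rule order_trans)
  then have "(1 / t) *\<^sub>R (t *\<^sub>R spectral_component k t) \<le> (1 / t) *\<^sub>R k"
    using assms(2) by (intro scaleR_left_mono) simp_all
  with assms(2) show ?thesis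
    by simp
qed

lemma spectral_component_of_neg:
  assumes "0 \<le> k" "t < 0"
  shows "spectral_component k t = e"
  unfolding spectral_component_def
proof (rule pos_component_eq_unit)
  define m where "m = nat \<lceil>1 / (- t)\<rceil>"
  have "1 / (- t) \<le> real m"
    unfolding m_def by linarith
  then have "1 \<le> real m * (- t)"
    using assms(2) by (simp add: field_simps)
  then have "e \<le> real m *\<^sub>R ((- t) *\<^sub>R e)"
    using scaleR_right_mono[OF _ unit_nonneg, of 1 "real m * (- t)"] by simp
  also have "(- t) *\<^sub>R e \<le> riesz.pprt (k - t *\<^sub>R e)"
    using assms(1) le_pprt[of "k - t *\<^sub>R e"] by (simp add: order_trans[of _ "k - t *\<^sub>R e"])
  then have "real m *\<^sub>R ((- t) *\<^sub>R e) \<le> real m *\<^sub>R riesz.pprt (k - t *\<^sub>R e)"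
    by (rule scaleR_left_mono) simp
  finally show "e \<le> real m *\<^sub>R riesz.pprt (k - t *\<^sub>R e)" .
qed

lemma rabs_mul_complement_spectral_component_le:
  assumes k: "0 \<le> k" and \<delta>: "0 < \<delta>"
    and layers: "\<And>s t. s \<le> t \<Longrightarrow> rabs (mul (spectral_component k s - spectral_component k t) D)
      \<le> (t - s) *\<^sub>R mul (spectral_component k s - spectral_component k t) Z"
  shows "rabs (mul (e - spectral_component k ((real M - 1) * \<delta>)) D)
    \<le> \<delta> *\<^sub>R mul (e - spectral_component k ((real M - 1) * \<delta>)) Z"
proof (induction M)
  case 0
  show ?case
    using \<delta> by (simp add: spectral_component_of_neg[OF k])
next
  case (Suc M)
  define Q where "Q i = spectral_component k ((real i - 1) * \<delta>)" for i :: nat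
  have split: "e - Q (Suc M) = (e - Q M) + (Q M - Q (Suc M))"
    by simp
  have layer: "rabs (mul (Q M - Q (Suc M)) D) \<le> \<delta> *\<^sub>R mul (Q M - Q (Suc M)) Z"
    using layers[of "(real M - 1) * \<delta>" "(real (Suc M) - 1) * \<delta>"] \<delta>
    by (simp add: Q_def algebra_simps)
  have "rabs (mul (e - Q (Suc M)) D) \<le> rabs (mul (e - Q M) D) + rabs (mul (Q M - Q (Suc M)) D)"
    unfolding split mul_add_left by (rule rabs_triangle)
  also have "\<dots> \<le> \<delta> *\<^sub>R mul (e - Q M) Z + \<delta> *\<^sub>R mul (Q M - Q (Suc M)) Z"
    using Suc.IH layer unfolding Q_def by (rule add_mono)
  also have "\<dots> = \<delta> *\<^sub>R mul (e - Q (Suc M)) Z"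
    by (simp only: split mul_add_left scaleR_add_right)
  finally show ?case
    by (simp only: Q_def)
qed

text \<open>If \<open>D\<close> is controlled on every spectral layer of \<open>k\<close> by the layer's width, then
  \<open>D = 0\<close>: summing over a partition of mesh \<open>1/n\<close> bounds \<open>|D|\<close> by \<open>Z/n\<close> off the small
  component \<open>spectral_component k j\<close>, which is itself at most \<open>k/j\<close>.\<close>

lemma eq_0_of_spectral_layer_bounds:
  assumes k: "0 \<le> k" and Z: "0 \<le> Z"
    and layers: "\<And>s t. s \<le> t \<Longrightarrow> rabs (mul (spectral_component k s - spectral_component k t) D)
      \<le> (t - s) *\<^sub>R mul (spectral_component k s - spectral_component k t) Z"
  shows "D = 0"
proof -
  have "rabs D \<le> (1 / real n) *\<^sub>R Z" if n: "n \<ge> 1" for n :: nat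
  proof -
    have "rabs D - (1 / real n) *\<^sub>R Z \<le> (1 / real j) *\<^sub>R mul k (rabs D)" if j: "j \<ge> 1" for j :: nat
    proof -
      define Q where "Q = spectral_component k (real j)"
      have Q: "is_component e Q" "Q = spectral_component k ((real (j * n + 1) - 1) * (1 / real n))"
        using n by (simp_all add: Q_def is_component_spectral_component)
      have "rabs D \<le> rabs (mul (e - Q) D) + rabs (mul Q D)"
        using rabs_triangle[of "mul (e - Q) D" "mul Q D"] by (simp flip: mul_add_left)
      also have "rabs (mul (e - Q) D) \<le> (1 / real n) *\<^sub>R mul (e - Q) Z"
        unfolding Q(2) using n by (intro rabs_mul_complement_spectral_component_le[OF k _ layers]) simp_all
      also have "\<dots> \<le> (1 / real n) *\<^sub>R Z"
        using mul_component_le(1)[OF is_component_complement[OF Q(1)] Z] by (simp add: scaleR_left_mono)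
      also have "rabs (mul Q D) = mul Q (rabs D)"
        using Q(1) by (simp add: rabs_mul_nonneg_left is_componentD)
      also have "\<dots> \<le> mul ((1 / real j) *\<^sub>R k) (rabs D)"
        using spectral_component_le[OF k, of "real j"] j by (intro mul_mono_left) (simp_all add: Q_def)
      finally show ?thesis
        by (simp add: mul_scaleR_left algebra_simps)
    qed
    then have "rabs D - (1 / real n) *\<^sub>R Z \<le> 0"
      by (rule archimedean_inverse)
    then show ?thesis
      by simp
  qed
  then have "rabs D \<le> 0"
    by (rule archimedean_inverse)
  then show "D = 0"
    by simp
qed

text \<open>A unital f-algebra is commutative: on each spectral layer of \<open>k\<close>, \<open>k\<close> is within the
  layer's width of a scalar, and scalars commute with everything.\<close>

lemma mul_commute_nonneg:
  assumes k: "0 \<le> k"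
  shows "mul k y = mul y k"
proof -
  have "mul k y - mul y k = 0"
  proof (rule eq_0_of_spectral_layer_bounds[OF k, of "2 *\<^sub>R rabs y"])
    fix s t :: real
    assume "s \<le> t"
    define r where "r = spectral_component k s - spectral_component k t"
    note layer = spectral_layer[OF \<open>s \<le> t\<close>, of k, folded r_def]
    define d where "d = mul r k - s *\<^sub>R r"
    have d: "0 \<le> d" "d \<le> (t - s) *\<^sub>R r"
      using layer(2,3) by (simp_all add: d_def scaleR_diff_left)
    have comm: "mul r z = mul z r" for z
      by (rule mul_component_commute[OF layer(1)])
    have "mul r (mul y k) = mul y (mul r k)"
      by (simp only: comm[of "mul y k"] comm[of k] mul_assoc)
    then have "mul r (mul k y - mul y k) = mul (mul r k) y - mul y (mul r k)"
      by (simp only: mul_diff_right mul_assoc)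
    also have "\<dots> = mul d y - mul y d"
      by (simp add: d_def mul_diff_left mul_diff_right mul_scaleR_left mul_scaleR_right comm[of y])
    also have "rabs \<dots> \<le> mul d (rabs y) + mul (rabs y) d"
      using rabs_diff_le[of "mul d y" "mul y d"] d(1) by (simp add: rabs_mul)
    also have "\<dots> \<le> mul ((t - s) *\<^sub>R r) (rabs y) + mul (rabs y) ((t - s) *\<^sub>R r)"
      using d by (intro add_mono mul_mono_left mul_mono_right) simp_all
    also have "\<dots> = (t - s) *\<^sub>R mul r (2 *\<^sub>R rabs y)"
      by (simp add: mul_scaleR_left mul_scaleR_right comm[of "rabs y"] scaleR_2 mul_add_right scaleR_add_right)
    finally show "rabs (mul (spectral_component k s - spectral_component k t) (mul k y - mul y k))
        \<le> (t - s) *\<^sub>R mul (spectral_component k s - spectral_component k t) (2 *\<^sub>R rabs y)"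
      by (simp only: r_def)
  qed (simp add: scaleR_nonneg_nonneg)
  then show ?thesis
    by simp
qed

lemma mul_commute: "mul x y = mul y x"
  using mul_pprt_split_left[of x y] mul_pprt_split_right[of y x]
  by (simp only: mul_commute_nonneg[OF riesz.zero_le_pprt])

end

section \<open>The Riesz space inside its universal completion\<close>

locale f_algebra_completion = complete_unital_f_algebra mul e
  for mul :: "'a::{ordered_real_vector,lattice} \<Rightarrow> 'a \<Rightarrow> 'a" and e +
  fixes E :: "'a set"
  assumes E_riesz_subspace: "riesz_subspace E"
    and E_order_dense: "order_dense E"
    and E_dedekind_complete: "dedekind_complete_on E"
    and unit_in_E: "e \<in> E"
begin

lemma E_zero: "0 \<in> E"
  and E_add: "x \<in> E \<Longrightarrow> y \<in> E \<Longrightarrow> x + y \<in> E"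
  and E_scaleR: "x \<in> E \<Longrightarrow> c *\<^sub>R x \<in> E"
  and E_sup: "x \<in> E \<Longrightarrow> y \<in> E \<Longrightarrow> sup x y \<in> E"
  and E_inf: "x \<in> E \<Longrightarrow> y \<in> E \<Longrightarrow> inf x y \<in> E"
  using E_riesz_subspace by (simp_all add: riesz_subspace_def)

lemma E_uminus: "x \<in> E \<Longrightarrow> - x \<in> E"
  using E_scaleR[of x "- 1"] by simp

lemma E_diff: "x \<in> E \<Longrightarrow> y \<in> E \<Longrightarrow> x - y \<in> E"
  using E_add[of x "- y"] E_uminus[of y] by simp

lemma E_rabs: "x \<in> E \<Longrightarrow> rabs x \<in> E"
  unfolding rabs_def by (intro E_sup E_uminus)

lemma E_pprt: "x \<in> E \<Longrightarrow> riesz.pprt x \<in> E"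
  unfolding riesz.pprt_def by (intro E_sup E_zero)

text \<open>\<open>E\<close> is an ideal of its universal completion: an element between \<open>0\<close> and an element
  of \<open>E\<close> is the supremum, taken in \<open>E\<close>, of the elements of \<open>E\<close> below it, and order density
  rules out any gap between the two.\<close>

lemma le_of_is_sup_in_order_interval:
  assumes s: "is_sup_in E {z \<in> E. 0 \<le> z \<and> z \<le> y} s"
  shows "s \<le> y"
proof (rule ccontr)
  assume "\<not> s \<le> y"
  then have "0 < riesz.pprt (s - y)"
    using le_pprt[of "s - y"] by (auto simp: order.strict_iff_order)
  then obtain z where z: "z \<in> E" "0 < z" "z \<le> riesz.pprt (s - y)"
    using E_order_dense unfolding order_dense_def by blast
  have "a \<le> s - z" if "a \<in> {z \<in> E. 0 \<le> z \<and> z \<le> y}" for a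
  proof -
    have "a \<le> inf s y"
      using s that by (simp add: is_sup_in_def)
    also have "inf s y = s - riesz.pprt (s - y)"
      by (simp only: diff_inf_eq_pprt[symmetric] diff_diff_eq2 add_diff_cancel_left')
    also have "\<dots> \<le> s - z"
      using z(3) by (rule diff_left_mono)
    finally show ?thesis .
  qed
  then have "s \<le> s - z"
    using s E_diff[of s z] z(1) by (simp add: is_sup_in_def)
  with z(2) show False
    by simp
qed

lemma eq_of_is_sup_in_order_interval:
  assumes y: "0 \<le> y" and s: "is_sup_in E {z \<in> E. 0 \<le> z \<and> z \<le> y} s"
  shows "s = y"
proof (rule order.antisym)
  show "s \<le> y"
    using s by (rule le_of_is_sup_in_order_interval)
  have sE: "s \<in> E" and s0: "0 \<le> s"
    using s E_zero y by (auto simp: is_sup_in_def)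
  show "y \<le> s"
  proof (rule ccontr)
    assume "\<not> y \<le> s"
    with \<open>s \<le> y\<close> have "0 < y - s"
      by (simp add: order.strict_iff_order)
    then obtain z where z: "z \<in> E" "0 < z" "z \<le> y - s"
      using E_order_dense unfolding order_dense_def by blast
    then have "s + z \<in> {z \<in> E. 0 \<le> z \<and> z \<le> y}"
      using E_add[OF sE z(1)] s0 by (simp add: le_diff_eq add.commute add_nonneg_nonneg)
    then have "s + z \<le> s"
      using s unfolding is_sup_in_def by blast
    with z(2) show False
      by simp
  qed
qed

lemma E_order_interval:
  assumes x: "x \<in> E" and y: "0 \<le> y" "y \<le> x"
  shows "y \<in> E"
proof -
  define A where "A = {z \<in> E. 0 \<le> z \<and> z \<le> y}"
  have "A \<subseteq> E \<and> A \<noteq> {} \<and> (\<exists>b\<in>E. \<forall>a\<in>A. a \<le> b)"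
    using E_zero y x by (auto simp: A_def intro!: bexI[of _ x] intro: order_trans)
  then obtain s where "is_sup_in E A s"
    using E_dedekind_complete unfolding dedekind_complete_on_def by blast
  then show ?thesis
    using eq_of_is_sup_in_order_interval[OF y(1)] by (auto simp: A_def is_sup_in_def)
qed

lemma E_solid:
  assumes "x \<in> E" "rabs y \<le> rabs x"
  shows "y \<in> E"
proof -
  have "riesz.pprt y \<in> E" "riesz.pprt (- y) \<in> E"
    using assms pprt_le_rabs[of y] pprt_uminus_le_rabs[of y]
    by (auto intro: E_order_interval[OF E_rabs] order_trans)
  then show ?thesis
    using E_diff pprt_diff_pprt_uminus[of y] by metis
qed

lemma mul_in_E:
  assumes "0 \<le> a" "a \<le> e" "x \<in> E"
  shows "mul a x \<in> E"
proof -
  have "rabs (mul a x) = mul a (rabs x)"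
    by (rule rabs_mul_nonneg_left[OF assms(1)])
  also have "\<dots> \<le> mul e (rabs x)"
    by (rule mul_mono_left[OF rabs_ge_0 assms(2)])
  finally show ?thesis
    using assms(3) by (intro E_solid[OF assms(3)]) simp
qed

lemma mul_component_in_E: "is_component e c \<Longrightarrow> x \<in> E \<Longrightarrow> mul c x \<in> E"
  by (simp add: mul_in_E is_component_def)

lemma bounded_below_has_inf:
  assumes "A \<subseteq> E" "A \<noteq> {}" "\<And>a. a \<in> A \<Longrightarrow> b \<le> a" "b \<in> E"
  shows "\<exists>s. is_inf_in E A s"
proof -
  have "uminus ` A \<subseteq> E \<and> uminus ` A \<noteq> {} \<and> (\<exists>b\<in>E. \<forall>a\<in>uminus ` A. a \<le> b)"
    using assms by (auto intro!: E_uminus bexI[of _ "- b"])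
  then obtain s where s: "is_sup_in E (uminus ` A) s"
    using E_dedekind_complete unfolding dedekind_complete_on_def by blast
  have "is_inf_in E A (- s)"
    unfolding is_inf_in_def
  proof (intro conjI ballI impI)
    show "- s \<in> E" "\<And>a. a \<in> A \<Longrightarrow> - s \<le> a"
      using s by (auto simp: is_sup_in_def E_uminus minus_le_iff)
  next
    fix c
    assume "c \<in> E" "\<forall>a\<in>A. c \<le> a"
    then have "s \<le> - c"
      using s E_uminus[of c] unfolding is_sup_in_def by auto
    then show "c \<le> - s"
      by (simp add: le_minus_iff)
  qed
  then show ?thesis ..
qed

lemma is_sup_in_component_kernel:
  assumes c: "is_component e c" and A: "A \<subseteq> {x \<in> E. mul (e - c) x = 0}" and s: "is_sup_in E A s"
  shows "s \<in> E" "mul (e - c) s = 0"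
proof -
  note c' = is_componentD[OF c]
  show sE: "s \<in> E"
    using s by (simp add: is_sup_in_def)
  show "mul (e - c) s = 0"
  proof (cases "A = {}")
    case True
    then have "s \<le> s - rabs s"
      using s E_diff E_rabs unfolding is_sup_in_def by blast
    then show ?thesis
      by simp
  next
    case False
    then obtain a0 where a0: "a0 \<in> A"
      by blast
    have "mul c a = a" if "a \<in> A" for a
      using that A mul_add_left[of c "e - c" a] by auto
    then have "a \<le> mul c s" if "a \<in> A" for a
      using that s c' mul_mono_right[of c a s] by (auto simp: is_sup_in_def)
    then have "s \<le> mul c s"
      using s mul_component_in_E[OF c sE] by (simp add: is_sup_in_def)
    then have "mul (e - c) s \<le> 0"
      by (simp add: mul_diff_left)
    moreover have "mul (e - c) a0 \<le> mul (e - c) s"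
      using s a0 c' by (intro mul_mono_right) (simp_all add: is_sup_in_def)
    ultimately show ?thesis
      using a0 A by (auto intro: order.antisym)
  qed
qed

lemma band_component_kernel:
  assumes c: "is_component e c"
  shows "band E {x \<in> E. mul (e - c) x = 0}" (is "band E ?B")
proof -
  note c' = is_componentD[OF c]
  have "riesz_subspace ?B"
    using c' by (auto simp: riesz_subspace_def E_zero E_add E_scaleR E_sup E_inf mul_add_right
        mul_scaleR_right mul_sup_right mul_inf_right)
  moreover have "x \<in> ?B" if "x \<in> E" "y \<in> ?B" "rabs x \<le> rabs y" for x y
  proof -
    have "rabs (mul (e - c) x) \<le> rabs (mul (e - c) y)"
      using that(3) c' by (simp add: rabs_mul_nonneg_left mul_mono_right)
    with that show ?thesis
      by simp
  qed
  moreover have "s \<in> ?B" if "A \<subseteq> ?B" "is_sup_in E A s" for A s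
    using is_sup_in_component_kernel[OF c that] by simp
  ultimately show ?thesis
    unfolding band_def by blast
qed

lemma band_projection_mul_component:
  assumes c: "is_component e c"
  shows "band_projection E (mul c)"
  unfolding band_projection_def
proof (intro exI conjI ballI)
  note c' = is_componentD[OF c]
  let ?B = "{x \<in> E. mul (e - c) x = 0}"
  show "band E ?B"
    using c by (rule band_component_kernel)
  fix x
  assume x: "x \<in> E"
  show "mul c x \<in> ?B"
    using mul_component_in_E[OF c x] by (simp add: mul_component_complement(2)[OF c] flip: mul_assoc)
  have "inf (rabs (mul (e - c) x)) (rabs y) = 0" if "y \<in> ?B" for y
  proof -
    have "inf c (mul (e - c) (rabs x)) = 0"
      using disjoint_mul_right[of "e - c" c "rabs x"] c' by (simp add: inf_commute)
    then have "inf (mul c (rabs y)) (mul (e - c) (rabs x)) = 0"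
      by (rule disjoint_mul_right) simp
    moreover have "mul c (rabs y) = rabs y"
      using that mul_add_left[of c "e - c" "rabs y"] rabs_mul_nonneg_left[OF c'(3), of y, symmetric]
      by simp
    ultimately show ?thesis
      using c' by (simp add: rabs_mul_nonneg_left inf_commute)
  qed
  then show "x - mul c x \<in> disj_compl E ?B"
    using mul_component_in_E[OF is_component_complement[OF c] x]
    by (simp add: disj_compl_def mul_diff_left)
qed

lemma band_projection_nonneg:
  assumes "band_projection E P" "x \<in> E" "0 \<le> x"
  shows "P x \<in> E" "0 \<le> P x" "P x \<le> x"
proof -
  obtain B where B: "band E B" "P x \<in> B" "x - P x \<in> disj_compl E B"
    using assms(1,2) unfolding band_projection_def by blast
  show "P x \<in> E"
    using B by (auto simp: band_def)
  have "inf (rabs (P x)) (rabs (x - P x)) = 0"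
    using B by (simp add: disj_compl_def inf_commute)
  then have "rabs (P x) + rabs (x - P x) = P x + (x - P x)"
    using assms(3) by (simp flip: rabs_add_of_disjoint)
  then have "(rabs (P x) - P x) + (rabs (x - P x) - (x - P x)) = 0"
    by (simp add: algebra_simps)
  moreover have "0 \<le> rabs (P x) - P x" "0 \<le> rabs (x - P x) - (x - P x)"
    by (simp_all add: le_rabs)
  ultimately have "rabs (P x) - P x = 0" "rabs (x - P x) - (x - P x) = 0"
    by (simp_all only: add_nonneg_eq_0_iff)
  then have "rabs (P x) = P x" "rabs (x - P x) = x - P x"
    by simp_all
  then show "0 \<le> P x" "P x \<le> x"
    by (metis rabs_ge_0 diff_ge_0_iff_ge)+
qed

lemma is_inf_in_truncation_tails:
  assumes f: "f \<in> E" "0 \<le> f"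
  shows "is_inf_in E (range (\<lambda>m::nat. riesz.pprt (f - real m *\<^sub>R e))) 0"
  unfolding is_inf_in_def
proof (intro conjI ballI impI)
  show "0 \<in> E" "\<And>d. d \<in> range (\<lambda>m::nat. riesz.pprt (f - real m *\<^sub>R e)) \<Longrightarrow> 0 \<le> d"
    using E_zero by auto
  fix b
  assume "b \<in> E" and lower: "\<forall>d\<in>range (\<lambda>m::nat. riesz.pprt (f - real m *\<^sub>R e)). b \<le> d"
  define w where "w = inf (riesz.pprt b) e"
  have w: "0 \<le> w" "w \<le> e"
    using unit_nonneg by (simp_all add: w_def)
  have tail: "w \<le> f - inf f (real m *\<^sub>R e)" for m :: nat
  proof -
    have "riesz.pprt b \<le> riesz.pprt (f - real m *\<^sub>R e)"
      using riesz.pprt_mono[of b "riesz.pprt (f - real m *\<^sub>R e)"] lower by simp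
    then show ?thesis
      by (simp only: diff_inf_eq_pprt w_def le_infI1)
  qed
  have "real n *\<^sub>R w \<le> f" for n :: nat
  proof (induction n)
    case (Suc n)
    have "real n *\<^sub>R w \<le> real n *\<^sub>R e"
      using w(2) by (rule scaleR_left_mono) simp
    with Suc.IH have "real n *\<^sub>R w + w \<le> inf f (real n *\<^sub>R e) + (f - inf f (real n *\<^sub>R e))"
      using tail[of n] by (intro add_mono) simp_all
    then show ?case
      by (simp add: algebra_simps del: riesz.diff_inf_eq_sup)
  qed (simp add: f)
  then have "w \<le> 0"
    by (rule archimedean)
  with w(1) have "w = 0"
    by (rule order.antisym[rotated])
  then have "riesz.pprt b = 0"
    using eq_0_of_disjoint_unit[of "riesz.pprt b"] by (simp add: w_def)
  then show "b \<le> 0"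
    using le_pprt[of b] by simp
qed

lemma downdirected_truncation_tails: "downdirected (range (\<lambda>m::nat. riesz.pprt (f - real m *\<^sub>R e)))"
proof -
  have "riesz.pprt (f - real (max m n) *\<^sub>R e) \<le> riesz.pprt (f - real k *\<^sub>R e)" if "k \<in> {m, n}" for k m n :: nat
    using that unit_nonneg by (auto intro!: riesz.pprt_mono diff_left_mono scaleR_right_mono)
  then show ?thesis
    unfolding downdirected_def by blast
qed

end

section \<open>Conditional expectation operators\<close>

locale cond_expectation = f_algebra_completion mul e E
  for mul :: "'a::{ordered_real_vector,lattice} \<Rightarrow> 'a \<Rightarrow> 'a" and e E +
  fixes W :: "'a \<Rightarrow> 'a"
  assumes cond_exp: "cond_exp E W"
    and W_unit: "W e = e"
begin

lemma W_in_E: "x \<in> E \<Longrightarrow> W x \<in> E"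
  and W_add: "x \<in> E \<Longrightarrow> y \<in> E \<Longrightarrow> W (x + y) = W x + W y"
  and W_scaleR: "x \<in> E \<Longrightarrow> W (c *\<^sub>R x) = c *\<^sub>R W x"
  and W_nonneg: "x \<in> E \<Longrightarrow> 0 \<le> x \<Longrightarrow> 0 \<le> W x"
  and W_idem: "x \<in> E \<Longrightarrow> W (W x) = W x"
  using cond_exp by (auto simp: cond_exp_def linear_on_def positive_on_def)

lemma W_order_continuous:
  "D \<subseteq> E \<Longrightarrow> D \<noteq> {} \<Longrightarrow> downdirected D \<Longrightarrow> is_inf_in E D 0 \<Longrightarrow> is_inf_in E (W ` D) 0"
  using cond_exp unfolding cond_exp_def order_continuous_on_def by blast

lemma W_diff: "x \<in> E \<Longrightarrow> y \<in> E \<Longrightarrow> W (x - y) = W x - W y"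
  using W_add[of x "- y"] W_scaleR[of y "- 1"] E_uminus[of y] by simp

lemma W_mono: "x \<in> E \<Longrightarrow> y \<in> E \<Longrightarrow> x \<le> y \<Longrightarrow> W x \<le> W y"
  using W_nonneg[of "y - x"] W_diff[of y x] E_diff[of y x] by simp

definition in_range :: "'a \<Rightarrow> bool" where
  "in_range x \<longleftrightarrow> x \<in> E \<and> W x = x"

lemma in_range_iff_image: "in_range x \<longleftrightarrow> x \<in> W ` E"
  by (auto simp: in_range_def W_in_E W_idem intro!: image_eqI[of x W x])

lemma in_range_W: "x \<in> E \<Longrightarrow> in_range (W x)"
  by (simp add: in_range_def W_in_E W_idem)

lemma in_range_unit: "in_range e"
  by (simp add: in_range_def unit_in_E W_unit)

lemma in_range_diff: "in_range x \<Longrightarrow> in_range y \<Longrightarrow> in_range (x - y)"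
  by (simp add: in_range_def W_diff E_diff)

lemma in_range_scaleR: "in_range x \<Longrightarrow> in_range (c *\<^sub>R x)"
  by (simp add: in_range_def W_scaleR E_scaleR)

lemma in_range_sup: "in_range x \<Longrightarrow> in_range y \<Longrightarrow> in_range (sup x y)"
  and in_range_inf: "in_range x \<Longrightarrow> in_range y \<Longrightarrow> in_range (inf x y)"
  using cond_exp unfolding cond_exp_def riesz_subspace_def in_range_iff_image by blast+

lemma in_range_zero: "in_range 0"
  using in_range_scaleR[OF in_range_unit, of 0] by simp

lemma in_range_pprt: "in_range x \<Longrightarrow> in_range (riesz.pprt x)"
  unfolding riesz.pprt_def by (intro in_range_sup in_range_zero)

lemma in_range_uminus: "in_range x \<Longrightarrow> in_range (- x)"
  using in_range_scaleR[of x "- 1"] by simp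

text \<open>Order continuity makes the range of \<open>W\<close> closed under order limits in \<open>E\<close>.\<close>

lemma in_range_of_is_inf_in:
  assumes D: "D \<noteq> {}" "downdirected D" "\<And>d. d \<in> D \<Longrightarrow> in_range d" and N: "is_inf_in E D N"
  shows "in_range N"
proof -
  have NE: "N \<in> E" and N_le: "\<And>d. d \<in> D \<Longrightarrow> N \<le> d"
    using N by (auto simp: is_inf_in_def)
  have DE: "d \<in> E" if "d \<in> D" for d
    using D(3)[OF that] by (simp add: in_range_def)
  define D' where "D' = (\<lambda>d. d - N) ` D"
  have "downdirected D'"
    using D(2) unfolding downdirected_def D'_def by (fastforce intro: diff_right_mono)
  moreover have "is_inf_in E D' 0"
    unfolding is_inf_in_def
  proof (intro conjI ballI impI)
    show "0 \<in> E" "\<And>d. d \<in> D' \<Longrightarrow> 0 \<le> d"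
      using E_zero N_le by (auto simp: D'_def)
    fix b
    assume "b \<in> E" "\<forall>d\<in>D'. b \<le> d"
    then have "b + N \<le> N"
      using N E_add[OF _ NE] unfolding is_inf_in_def D'_def by (auto simp: le_diff_eq)
    then show "b \<le> 0"
      by simp
  qed
  ultimately have inf: "is_inf_in E (W ` D') 0"
    using D(1) DE NE by (intro W_order_continuous) (auto simp: D'_def intro: E_diff)
  have W_shift: "W (d - N) = d - W N" if "d \<in> D" for d
    using D(3)[OF that] DE[OF that] NE by (simp add: W_diff in_range_def)
  have "W N \<le> N"
  proof -
    have "W N \<le> d" if "d \<in> D" for d
      using inf that W_shift[OF that] by (force simp: is_inf_in_def D'_def)
    then show ?thesis
      using N W_in_E[OF NE] by (simp add: is_inf_in_def)
  qed
  moreover have "N - W N \<le> 0"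
    using inf N_le W_shift E_diff[OF NE W_in_E[OF NE]] by (auto simp: is_inf_in_def D'_def)
  ultimately show ?thesis
    using NE by (simp add: in_range_def)
qed

lemma in_range_of_is_sup_in:
  assumes "A \<noteq> {}" "updirected A" "\<And>a. a \<in> A \<Longrightarrow> in_range a" "is_sup_in E A s"
  shows "in_range s"
proof -
  have "is_inf_in E (uminus ` A) (- s)"
    using assms(4) unfolding is_sup_in_def is_inf_in_def
    by (auto simp: E_uminus minus_le_iff) (metis E_uminus minus_minus neg_le_iff_le)
  moreover have "downdirected (uminus ` A)"
    unfolding downdirected_def
  proof (intro ballI)
    fix u v
    assume "u \<in> uminus ` A" "v \<in> uminus ` A"
    then obtain a b where "a \<in> A" "b \<in> A" "u = - a" "v = - b"
      by blast
    then obtain c where "c \<in> A" "a \<le> c" "b \<le> c"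
      using assms(2) unfolding updirected_def by blast
    then show "\<exists>w\<in>uminus ` A. w \<le> u \<and> w \<le> v"
      using \<open>u = - a\<close> \<open>v = - b\<close> by (intro bexI[of _ "- c"]) auto
  qed
  ultimately have "in_range (- s)"
    using assms by (rule_tac in_range_of_is_inf_in) (auto intro: in_range_uminus)
  then show ?thesis
    using in_range_uminus[of "- s"] by simp
qed

lemma in_range_pos_component:
  assumes "in_range x"
  shows "in_range (pos_component x)"
proof (rule in_range_of_is_sup_in[of "range (\<lambda>n::nat. inf (real n *\<^sub>R riesz.pprt x) e)"])
  let ?a = "\<lambda>n::nat. inf (real n *\<^sub>R riesz.pprt x) e"
  show "in_range a" if "a \<in> range ?a" for a
    using that assms by (auto intro: in_range_inf in_range_scaleR in_range_pprt in_range_unit)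
  have "?a m \<le> ?a (max m n)" "?a n \<le> ?a (max m n)" for m n
    by (intro inf_mono scaleR_right_mono order_refl; simp)+
  then show "updirected (range ?a)"
    unfolding updirected_def by blast
  have "pos_component x \<in> E"
    using E_order_interval[OF unit_in_E pos_component_nonneg pos_component_le_unit] .
  then show "is_sup_in E (range ?a) (pos_component x)"
    using pos_component_is_sup[of x] by (simp add: is_sup_in_def)
qed simp

lemma in_range_spectral_component: "in_range k \<Longrightarrow> in_range (spectral_component k t)"
  unfolding spectral_component_def
  by (intro in_range_pos_component in_range_diff in_range_scaleR in_range_unit)

lemma W_mul_component_le:
  assumes r: "is_component e r" "in_range r" and g: "g \<in> E" "0 \<le> g" "g \<le> c *\<^sub>R e"
  shows "W (mul r g) \<le> c *\<^sub>R r"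
proof -
  have "mul r g \<le> c *\<^sub>R r"
    using mul_mono_right[OF is_componentD(1)[OF r(1)] g(3)] by (simp add: mul_scaleR_right)
  then have "W (mul r g) \<le> W (c *\<^sub>R r)"
    using r g by (intro W_mono mul_component_in_E E_scaleR) (simp_all add: in_range_def)
  then show ?thesis
    using r(2) by (simp add: W_scaleR in_range_def)
qed

lemma mul_complement_W_mul_component_le_tail:
  assumes r: "is_component e r" "in_range r" and f: "f \<in> E" "0 \<le> f" and c: "0 \<le> c"
  shows "mul (e - r) (W (mul r f)) \<le> W (riesz.pprt (f - c *\<^sub>R e))"
proof -
  note r' = is_componentD[OF r(1)]
  define g1 g2 where "g1 = inf f (c *\<^sub>R e)" and "g2 = riesz.pprt (f - c *\<^sub>R e)"
  have "f = g1 + g2"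
    unfolding g1_def g2_def diff_inf_eq_pprt[symmetric] by (simp del: riesz.diff_inf_eq_sup)
  moreover have "g1 \<in> E" "g2 \<in> E" "0 \<le> g1" "0 \<le> g2"
    using f c unit_in_E unit_nonneg
    by (simp_all add: g1_def g2_def E_inf E_pprt E_diff E_scaleR scaleR_nonneg_nonneg)
  ultimately have g: "g1 \<in> E" "g2 \<in> E" "0 \<le> g1" "0 \<le> g2" "f = g1 + g2"
    by simp_all
  have rg: "mul r g1 \<in> E" "mul r g2 \<in> E" "0 \<le> W (mul r g1)" "0 \<le> W (mul r g2)"
    using r g by (simp_all add: mul_component_in_E W_nonneg mul_component_le(2))
  have "W (mul r g1) \<le> c *\<^sub>R r"
    using r g(1,3) by (rule W_mul_component_le) (simp add: g1_def)
  then have "mul (e - r) (W (mul r g1)) \<le> mul (e - r) (c *\<^sub>R r)"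
    by (rule mul_mono_right[OF r'(3)])
  also have "\<dots> = 0"
    by (simp add: mul_scaleR_right mul_component_complement(2)[OF r(1)])
  finally have "mul (e - r) (W (mul r g1)) = 0"
    using mul_nonneg[OF r'(3) rg(3)] by (intro order.antisym)
  moreover have "W (mul r f) = W (mul r g1) + W (mul r g2)"
    unfolding g(5) mul_add_right by (rule W_add[OF rg(1,2)])
  ultimately have "mul (e - r) (W (mul r f)) = mul (e - r) (W (mul r g2))"
    by (simp add: mul_add_right)
  also have "\<dots> \<le> W (mul r g2)"
    using is_component_complement[OF r(1)] rg(4) by (rule mul_component_le(1))
  also have "\<dots> \<le> W g2"
    using r g rg by (intro W_mono mul_component_le(1)) simp_all
  finally show ?thesis
    by (simp add: g2_def)
qed

text \<open>Truncating \<open>f\<close> at level \<open>m e\<close> bounds the part of \<open>W (r f)\<close> outside \<open>r\<close> by the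
  conditional expectation of the tail \<open>(f - m e)\<^sup>+\<close>, and these tails decrease to \<open>0\<close>.\<close>

lemma mul_complement_W_mul_component:
  assumes r: "is_component e r" "in_range r" and f: "f \<in> E" "0 \<le> f"
  shows "mul (e - r) (W (mul r f)) = 0"
proof -
  define a where "a = mul (e - r) (W (mul r f))"
  have "0 \<le> W (mul r f)" "W (mul r f) \<in> E"
    using r f by (simp_all add: W_nonneg W_in_E mul_component_in_E mul_component_le(2))
  then have a: "0 \<le> a" "a \<in> E"
    using is_componentD[OF r(1)] by (simp_all add: a_def mul_nonneg mul_in_E)
  have "is_inf_in E (W ` range (\<lambda>m::nat. riesz.pprt (f - real m *\<^sub>R e))) 0"
    using f unit_in_E
    by (intro W_order_continuous is_inf_in_truncation_tails downdirected_truncation_tails)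
      (auto intro: E_pprt E_diff E_scaleR)
  moreover have "a \<le> W (riesz.pprt (f - real m *\<^sub>R e))" for m :: nat
    unfolding a_def using r f by (rule mul_complement_W_mul_component_le_tail) simp
  ultimately have "a \<le> 0"
    using a(2) unfolding is_inf_in_def by blast
  with a(1) show ?thesis
    by (simp add: a_def order.antisym)
qed

lemma W_mul_component_nonneg:
  assumes r: "is_component e r" "in_range r" and f: "f \<in> E" "0 \<le> f"
  shows "W (mul r f) = mul r (W f)"
proof -
  have r_compl: "is_component e (e - r)" "in_range (e - r)"
    using r by (simp_all add: is_component_complement in_range_diff in_range_unit)
  have outside: "mul (e - r) (W (mul r f)) = 0"
    using r f by (rule mul_complement_W_mul_component)
  have inside: "mul r (W (mul (e - r) f)) = 0"
    using mul_complement_W_mul_component[OF r_compl f] by simp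
  have "W f = W (mul r f) + W (mul (e - r) f)"
    using W_add[OF mul_component_in_E[OF r(1) f(1)] mul_component_in_E[OF r_compl(1) f(1)]]
    by (simp flip: mul_add_left)
  then have "mul r (W f) = mul r (W (mul r f))"
    by (simp add: mul_add_right inside)
  also have "\<dots> = W (mul r f)"
    using mul_add_left[of r "e - r" "W (mul r f)"] outside by simp
  finally show ?thesis ..
qed

lemma W_mul_component:
  assumes r: "is_component e r" "in_range r" and f: "f \<in> E"
  shows "W (mul r f) = mul r (W f)"
proof -
  have parts: "riesz.pprt f \<in> E" "riesz.pprt (- f) \<in> E"
    using f by (simp_all add: E_pprt E_uminus)
  have "W (mul r f) = W (mul r (riesz.pprt f)) - W (mul r (riesz.pprt (- f)))"
    using mul_pprt_split_right[of r f] parts by (simp add: W_diff mul_component_in_E[OF r(1)])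
  also have "\<dots> = mul r (W (riesz.pprt f) - W (riesz.pprt (- f)))"
    using parts by (simp add: W_mul_component_nonneg[OF r] mul_diff_right)
  also have "W (riesz.pprt f) - W (riesz.pprt (- f)) = W f"
    using parts by (simp add: pprt_diff_pprt_uminus flip: W_diff)
  finally show ?thesis .
qed

text \<open>On a spectral layer \<open>r\<close> of \<open>k\<close> (where \<open>s r \<le> r k \<le> t r\<close>), the two sides of the
  averaging identity differ from \<open>s\<close> times the same quantity by terms in \<open>[0, (t - s) r W f]\<close>.\<close>

lemma rabs_mul_spectral_layer_W_mul_le:
  assumes k: "in_range k" and f: "f \<in> E" "0 \<le> f" and kf: "mul k f \<in> E" and "s \<le> t"
  defines "r \<equiv> spectral_component k s - spectral_component k t"
  shows "rabs (mul r (W (mul k f) - mul k (W f))) \<le> (t - s) *\<^sub>R mul r (W f)"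
proof -
  note layer = spectral_layer[OF \<open>s \<le> t\<close>, of k, folded r_def]
  have r: "in_range r"
    unfolding r_def using k by (intro in_range_diff in_range_spectral_component)
  define d where "d = mul r k - s *\<^sub>R r"
  have d: "0 \<le> d" "d \<le> (t - s) *\<^sub>R r" and rk: "mul r k = s *\<^sub>R r + d"
    using layer(2,3) by (simp_all add: d_def scaleR_diff_left)
  have rf: "mul r f \<in> E" "0 \<le> mul r f"
    using layer(1) f by (simp_all add: mul_component_in_E mul_component_le(2))
  have df: "0 \<le> mul d f" "mul d f \<le> (t - s) *\<^sub>R mul r f"
    using mul_nonneg[OF d(1) f(2)] mul_mono_left[OF f(2) d(2)] by (simp_all add: mul_scaleR_left)
  then have df_E: "mul d f \<in> E"
    using E_order_interval[OF E_scaleR[OF rf(1)]] by blast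
  have Wf: "0 \<le> W f"
    using f by (rule W_nonneg)
  have "mul r (W (mul k f)) = W (mul (mul r k) f)"
    using W_mul_component[OF layer(1) r kf] by (simp add: mul_assoc)
  also have "\<dots> = s *\<^sub>R mul r (W f) + W (mul d f)"
    using rf df_E f by (simp add: rk mul_add_left mul_scaleR_left W_add E_scaleR W_scaleR
        W_mul_component[OF layer(1) r])
  finally have "mul r (W (mul k f) - mul k (W f)) = W (mul d f) - mul d (W f)"
    by (simp add: mul_diff_right rk mul_add_left mul_scaleR_left flip: mul_assoc)
  moreover have "0 \<le> W (mul d f)" "W (mul d f) \<le> (t - s) *\<^sub>R mul r (W f)"
    using W_nonneg[OF df_E df(1)] W_mono[OF df_E E_scaleR[OF rf(1)] df(2)] rf(1) f
    by (simp_all add: W_scaleR W_mul_component[OF layer(1) r])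
  moreover have "0 \<le> mul d (W f)" "mul d (W f) \<le> (t - s) *\<^sub>R mul r (W f)"
    using mul_nonneg[OF d(1) Wf] mul_mono_left[OF Wf d(2)] by (simp_all add: mul_scaleR_left)
  ultimately show ?thesis
    by (simp add: rabs_diff_le_of_between)
qed

lemma W_mul_in_range_nonneg:
  assumes k: "in_range k" "0 \<le> k" and f: "f \<in> E" "0 \<le> f" and kf: "mul k f \<in> E"
  shows "W (mul k f) = mul k (W f)"
proof -
  have "W (mul k f) - mul k (W f) = 0"
    using k(2) W_nonneg[OF f] rabs_mul_spectral_layer_W_mul_le[OF k(1) f kf]
    by (rule eq_0_of_spectral_layer_bounds)
  then show ?thesis
    by simp
qed

lemma W_mul_in_range_nonneg_left:
  assumes k: "in_range k" "0 \<le> k" and f: "f \<in> E" and kf: "mul k f \<in> E"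
  shows "W (mul k f) = mul k (W f)"
proof -
  have "rabs (mul k (riesz.pprt f)) \<le> rabs (mul k f)" "rabs (mul k (riesz.pprt (- f))) \<le> rabs (mul k f)"
    using k(2) by (simp_all add: rabs_mul mul_mono_right pprt_le_rabs pprt_uminus_le_rabs)
  then have parts: "mul k (riesz.pprt f) \<in> E" "mul k (riesz.pprt (- f)) \<in> E"
    using kf by (simp_all add: E_solid)
  have "W (mul k f) = W (mul k (riesz.pprt f)) - W (mul k (riesz.pprt (- f)))"
    using mul_pprt_split_right[of k f] parts by (simp add: W_diff)
  also have "\<dots> = mul k (W (riesz.pprt f) - W (riesz.pprt (- f)))"
    using parts f by (simp add: W_mul_in_range_nonneg[OF k] E_pprt E_uminus mul_diff_right)
  also have "W (riesz.pprt f) - W (riesz.pprt (- f)) = W f"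
    using f by (simp add: E_pprt E_uminus pprt_diff_pprt_uminus flip: W_diff)
  finally show ?thesis .
qed

lemma W_mul_in_range:
  assumes k: "in_range k" and f: "f \<in> E" and kf: "mul k f \<in> E"
  shows "W (mul k f) = mul k (W f)"
proof -
  have "rabs (mul (riesz.pprt k) f) \<le> rabs (mul k f)" "rabs (mul (riesz.pprt (- k)) f) \<le> rabs (mul k f)"
    by (simp_all add: rabs_mul mul_mono_left pprt_le_rabs pprt_uminus_le_rabs)
  then have parts: "mul (riesz.pprt k) f \<in> E" "mul (riesz.pprt (- k)) f \<in> E"
    using kf by (simp_all add: E_solid)
  have "W (mul k f) = W (mul (riesz.pprt k) f) - W (mul (riesz.pprt (- k)) f)"
    using mul_pprt_split_left[of k f] parts by (simp add: W_diff)
  also have "\<dots> = mul k (W f)"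
    using parts k f mul_pprt_split_left[of k "W f"]
    by (simp add: W_mul_in_range_nonneg_left in_range_pprt in_range_uminus)
  finally show ?thesis .
qed

lemma W_rabs_eq_of_W_eq_0:
  assumes "x \<in> E" "W x = 0"
  shows "W (rabs x) = 2 *\<^sub>R W (riesz.pprt x)"
proof -
  have "rabs x = 2 *\<^sub>R riesz.pprt x - x"
    using pprt_diff_pprt_uminus[of x] by (simp add: rabs_eq_pprt_add_pprt_uminus scaleR_2 algebra_simps)
  with assms show ?thesis
    by (simp add: W_diff W_scaleR E_scaleR E_pprt)
qed

lemma component_in_bandsB: "is_component e c \<Longrightarrow> in_range c \<Longrightarrow> mul c \<in> bandsB E e W"
  by (simp add: bandsB_def band_projection_mul_component in_range_iff_image)

context
  fixes g :: 'a
  assumes g: "g \<in> Linfty E W"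
begin

lemma is_inf_in_norm_Tinf: "is_inf_in E {h \<in> W ` E. 0 \<le> h \<and> rabs g \<le> h} (norm_Tinf E W g)"
proof -
  have "\<exists>N. is_inf_in E {h \<in> W ` E. 0 \<le> h \<and> rabs g \<le> h} N"
    using g E_zero by (intro bounded_below_has_inf[of _ 0]) (auto simp: Linfty_def W_in_E)
  then show ?thesis
    by (auto simp: norm_Tinf_def inf_in_eq)
qed

lemma rabs_le_norm_Tinf: "rabs g \<le> norm_Tinf E W g"
  using is_inf_in_norm_Tinf g by (auto simp: is_inf_in_def Linfty_def E_rabs)

lemma in_range_norm_Tinf: "in_range (norm_Tinf E W g)"
proof (rule in_range_of_is_inf_in[OF _ _ _ is_inf_in_norm_Tinf])
  show "{h \<in> W ` E. 0 \<le> h \<and> rabs g \<le> h} \<noteq> {}"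
  proof -
    obtain h where "h \<in> W ` E" "0 \<le> h" "rabs g \<le> h"
      using g by (auto simp: Linfty_def)
    then show ?thesis
      by auto
  qed
  show "downdirected {h \<in> W ` E. 0 \<le> h \<and> rabs g \<le> h}"
    unfolding downdirected_def
  proof (intro ballI)
    fix a b
    assume "a \<in> {h \<in> W ` E. 0 \<le> h \<and> rabs g \<le> h}" "b \<in> {h \<in> W ` E. 0 \<le> h \<and> rabs g \<le> h}"
    then have "inf a b \<in> {h \<in> W ` E. 0 \<le> h \<and> rabs g \<le> h}"
      by (simp flip: in_range_iff_image add: in_range_inf)
    then show "\<exists>c\<in>{h \<in> W ` E. 0 \<le> h \<and> rabs g \<le> h}. c \<le> a \<and> c \<le> b"
      by (intro bexI[of _ "inf a b"]) simp_all
  qed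
qed (simp add: in_range_iff_image)

lemma W_mul_le_norm_Tinf:
  assumes u: "u \<in> E" "rabs u \<le> e"
  shows "W (mul u g) \<le> mul (norm_Tinf E W g) (W (rabs u))"
proof -
  let ?N = "norm_Tinf E W g"
  have gE: "g \<in> E" and NE: "?N \<in> E"
    using g in_range_norm_Tinf by (simp_all add: Linfty_def in_range_def)
  have "mul u g \<in> E" "mul (rabs u) ?N \<in> E"
    using mul_in_E[OF rabs_ge_0 u(2)] gE NE E_solid[of "mul (rabs u) g" "mul u g"]
    by (simp_all add: rabs_mul)
  moreover have "mul u g \<le> mul (rabs u) ?N"
    using mul_le_rabs_mul_rabs[of u g] mul_mono_right[OF rabs_ge_0 rabs_le_norm_Tinf]
    by (rule order_trans)
  ultimately have "W (mul u g) \<le> W (mul (rabs u) ?N)"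
    by (rule W_mono)
  also have "\<dots> = mul ?N (W (rabs u))"
    using \<open>mul (rabs u) ?N \<in> E\<close> u(1)
    by (simp add: mul_commute[of "rabs u"] W_mul_in_range in_range_norm_Tinf E_rabs)
  finally show ?thesis .
qed

end

end

locale compatible_cond_expectations =
  T: cond_expectation mul e E T + W: cond_expectation mul e E W for mul e E T W +
  assumes compatible: "compatible E T W"
begin

lemma T_W: "x \<in> E \<Longrightarrow> T (W x) = T x"
  and W_T: "x \<in> E \<Longrightarrow> W (T x) = T x"
  using compatible by (simp_all add: compatible_def)

lemma T_mul_W_swap:
  assumes a: "0 \<le> a" "a \<le> e" "a \<in> E" and f: "f \<in> E"
  shows "T (mul a (W f)) = T (mul (W a) f)"
proof -
  have Wa: "0 \<le> W a" "W a \<le> e"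
    using a W.W_nonneg W.W_mono[OF a(3) T.unit_in_E] by (simp_all add: W.W_unit)
  have products: "mul a (W f) \<in> E" "mul (W f) a \<in> E" "mul (W a) f \<in> E"
    using a f Wa T.mul_in_E[of a "W f"] T.mul_in_E[of "W a" f] W.W_in_E T.mul_commute[of a]
    by simp_all
  have "T (mul a (W f)) = T (W (mul (W f) a))"
    using products by (simp add: T_W T.mul_commute[of a])
  also have "\<dots> = T (mul (W a) (W f))"
    using W.W_mul_in_range[OF W.in_range_W[OF f] a(3) products(2)] by (simp add: T.mul_commute[of "W f"])
  also have "\<dots> = T (W (mul (W a) f))"
    using W.W_mul_in_range[OF W.in_range_W[OF a(3)] f products(3)] by simp
  also have "\<dots> = T (mul (W a) f)"
    using products by (simp add: T_W)
  finally show ?thesis .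
qed

end

section \<open>The mixing inequality\<close>

locale compatible_triple =
  T: cond_expectation mul e E T + U: cond_expectation mul e E U + V: cond_expectation mul e E V
  for mul e E T U V +
  assumes compatible_U: "compatible E T U" and compatible_V: "compatible E T V"
begin

sublocale TU: compatible_cond_expectations mul e E T U
  by unfold_locales (rule compatible_U)

sublocale TV: compatible_cond_expectations mul e E T V
  by unfold_locales (rule compatible_V)

sublocale TT: compatible_cond_expectations mul e E T T
  by unfold_locales (simp add: compatible_def T.W_idem)

lemma T_band_projection_unit:
  assumes "band_projection E P" "x \<in> E" "0 \<le> x" "x \<le> e"
  shows "T (P x) \<in> E" "0 \<le> T (P x)" "T (P x) \<le> e"
proof -
  note Px = T.band_projection_nonneg[OF assms(1-3)]
  show "T (P x) \<in> E" "0 \<le> T (P x)"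
    using Px by (simp_all add: T.W_in_E T.W_nonneg)
  show "T (P x) \<le> e"
    using T.W_mono[OF Px(1) T.unit_in_E] Px(3) assms(4) T.W_unit by simp
qed

lemma le_alphaT:
  assumes "P \<in> bandsB E e U" "Q \<in> bandsB E e V"
  shows "rabs (T (P (Q e)) - mul (T (P e)) (T (Q e))) \<le> alphaT E mul e T U V"
proof -
  define A where "A = {rabs (T (P (Q e)) - mul (T (P e)) (T (Q e))) | P Q. P \<in> bandsB E e U \<and> Q \<in> bandsB E e V}"
  have bounded: "a \<in> E \<and> a \<le> e" if "a \<in> A" for a
  proof -
    obtain P Q where PQ: "band_projection E P" "band_projection E Q"
      and a: "a = rabs (T (P (Q e)) - mul (T (P e)) (T (Q e)))"
      using \<open>a \<in> A\<close> by (auto simp: A_def bandsB_def)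
    note Qe = T.band_projection_nonneg[OF PQ(2) T.unit_in_E T.unit_nonneg]
    note PQe = T_band_projection_unit[OF PQ(1) Qe(1,2) order_trans[OF Qe(3) order_refl]]
    note Pe = T_band_projection_unit[OF PQ(1) T.unit_in_E T.unit_nonneg order_refl]
    note Qe' = T_band_projection_unit[OF PQ(2) T.unit_in_E T.unit_nonneg order_refl]
    have "0 \<le> mul (T (P e)) (T (Q e))" "mul (T (P e)) (T (Q e)) \<le> e"
      using T.mul_nonneg[OF Pe(2) Qe'(2)] T.mul_mono_left[OF Qe'(2) Pe(3)] Qe'(3) by simp_all
    moreover have "mul (T (P e)) (T (Q e)) \<in> E"
      using T.mul_in_E[OF Pe(2,3) Qe'(1)] .
    ultimately show ?thesis
      using PQe by (simp add: a rabs_diff_le_of_between T.E_rabs T.E_diff)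
  qed
  have elem: "rabs (T (P (Q e)) - mul (T (P e)) (T (Q e))) \<in> A"
    using assms by (auto simp: A_def)
  then obtain s where "is_sup_in E A s"
    using T.E_dedekind_complete bounded T.unit_in_E unfolding dedekind_complete_on_def
    by (metis empty_iff subsetI)
  then have "is_sup_in E A (alphaT E mul e T U V)"
    by (simp add: alphaT_def A_def sup_in_eq)
  with elem show ?thesis
    by (simp add: is_sup_in_def)
qed

lemma in_range_V_diff_T:
  assumes "x \<in> E"
  shows "V.in_range (V x - T x)" "T (V x - T x) = 0"
  using assms by (simp_all add: V.in_range_def V.W_diff T.W_diff V.W_in_E T.W_in_E T.E_diff V.W_idem
      TV.W_T TV.T_W T.W_idem)

lemma T_rabs_V_diff_T_le_alphaT:
  assumes p: "is_component e p" "U.in_range p"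
  shows "T (rabs (V p - T p)) \<le> 2 *\<^sub>R alphaT E mul e T U V"
proof -
  note p' = is_componentD[OF p(1)]
  have pE: "p \<in> E"
    using p(2) by (simp add: U.in_range_def)
  define u where "u = V p - T p"
  define q where "q = T.pos_component u"
  have uE: "u \<in> E"
    using pE by (simp add: u_def T.E_diff V.W_in_E T.W_in_E)
  have q: "is_component e q" "V.in_range q"
    unfolding q_def using in_range_V_diff_T[OF pE] by (simp_all add: u_def T.is_component_pos_component
        V.in_range_pos_component)
  note q' = is_componentD[OF q(1)]
  have qE: "q \<in> E"
    using q(2) by (simp add: V.in_range_def)
  have "riesz.pprt u = mul q (V p) - mul q (T p)"
    unfolding q_def T.mul_pos_component[symmetric] by (simp add: u_def T.mul_diff_right)
  then have "T (riesz.pprt u) = T (mul q (V p)) - T (mul q (T p))"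
    using q(1) pE by (simp add: T.W_diff T.mul_component_in_E V.W_in_E T.W_in_E)
  also have "T (mul q (V p)) = T (mul q p)"
    using TV.T_mul_W_swap[OF q'(1,2) qE pE] q(2) by (simp add: V.in_range_def)
  also have "T (mul q (T p)) = mul (T p) (T q)"
    using TT.T_mul_W_swap[OF q'(1,2) qE pE] T.W_mul_in_range[OF T.in_range_W[OF qE] pE]
      T.mul_in_E[of "T q" p] T.W_nonneg[OF qE q'(1)] T.W_mono[OF qE T.unit_in_E q'(2)] pE
    by (simp add: T.W_unit T.mul_commute[of "T q"])
  finally have "T (riesz.pprt u) \<le> rabs (T (mul p (mul q e)) - mul (T (mul p e)) (T (mul q e)))"
    by (simp add: le_rabs T.mul_commute[of q])
  also have "\<dots> \<le> alphaT E mul e T U V"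
    using q p by (intro le_alphaT U.component_in_bandsB V.component_in_bandsB)
  finally show ?thesis
    using in_range_V_diff_T[OF pE] uE
    by (simp add: u_def[symmetric] T.W_rabs_eq_of_W_eq_0 scaleR_left_mono)
qed

lemma T_rabs_UV_diff_T:
  assumes "g \<in> E"
  shows "T (rabs (U (V g) - T g)) = 2 *\<^sub>R T (riesz.pprt (U (V g) - T g))"
  using assms by (intro T.W_rabs_eq_of_W_eq_0)
    (simp_all add: T.E_diff U.W_in_E V.W_in_E T.W_in_E T.W_diff TU.T_W TV.T_W T.W_idem)

lemma T_pprt_UV_diff_T_le:
  assumes g: "g \<in> Linfty E T"
  obtains p where "is_component e p" "U.in_range p"
    "T (riesz.pprt (U (V g) - T g)) \<le> mul (norm_Tinf E T g) (T (rabs (V p - T p)))"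
proof
  have gE: "g \<in> E"
    using g by (simp add: Linfty_def)
  define h where "h = U (V g) - T g"
  define p where "p = T.pos_component h"
  have hE: "h \<in> E"
    using gE by (simp add: h_def T.E_diff U.W_in_E V.W_in_E T.W_in_E)
  have "U.in_range h"
    using gE by (simp add: h_def U.in_range_def U.W_diff U.W_in_E V.W_in_E T.W_in_E hE[unfolded h_def]
        U.W_idem TU.W_T)
  then show p: "is_component e p" "U.in_range p"
    by (simp_all add: p_def T.is_component_pos_component U.in_range_pos_component)
  note p' = is_componentD[OF p(1)]
  have pE: "p \<in> E"
    using p(2) by (simp add: U.in_range_def)
  have Vp: "0 \<le> V p" "V p \<le> e" "V p \<in> E" and Tp: "0 \<le> T p" "T p \<le> e" "T p \<in> E"
    using V.W_nonneg[OF pE p'(1)] V.W_mono[OF pE T.unit_in_E p'(2)] T.W_nonneg[OF pE p'(1)]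
      T.W_mono[OF pE T.unit_in_E p'(2)] pE
    by (simp_all add: V.W_unit T.W_unit V.W_in_E T.W_in_E)
  have "riesz.pprt h = mul p (U (V g)) - mul p (T g)"
    unfolding p_def T.mul_pos_component[symmetric] by (simp add: h_def T.mul_diff_right)
  then have "T (riesz.pprt h) = T (mul p (U (V g))) - T (mul p (T g))"
    using p(1) gE by (simp add: T.W_diff T.mul_component_in_E U.W_in_E V.W_in_E T.W_in_E)
  also have "T (mul p (U (V g))) = T (mul (V p) g)"
    using TU.T_mul_W_swap[OF p'(1,2) pE V.W_in_E[OF gE]] TV.T_mul_W_swap[OF p'(1,2) pE gE] p(2)
    by (simp add: U.in_range_def)
  also have "T (mul p (T g)) = T (mul (T p) g)"
    using TT.T_mul_W_swap[OF p'(1,2) pE gE] .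
  also have "T (mul (V p) g) - T (mul (T p) g) = T (mul (V p - T p) g)"
    using Vp Tp gE by (simp add: T.W_diff T.mul_in_E T.mul_diff_left)
  also have "\<dots> \<le> mul (norm_Tinf E T g) (T (rabs (V p - T p)))"
    using Vp Tp g by (intro T.W_mul_le_norm_Tinf) (simp_all add: T.E_diff rabs_diff_le_of_between)
  finally show "T (riesz.pprt (U (V g) - T g)) \<le> mul (norm_Tinf E T g) (T (rabs (V p - T p)))"
    by (simp add: h_def)
qed


lemma norm_T1_UV_diff_T_le:
  assumes g: "g \<in> Linfty E T"
  shows "norm_T1 T (U (V g) - T g) \<le> 4 *\<^sub>R mul (alphaT E mul e T U V) (norm_Tinf E T g)"
proof -
  obtain p where p: "is_component e p" "U.in_range p"
    and pprt_le: "T (riesz.pprt (U (V g) - T g)) \<le> mul (norm_Tinf E T g) (T (rabs (V p - T p)))"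
    using T_pprt_UV_diff_T_le[OF g] .
  have N: "0 \<le> norm_Tinf E T g"
    using rabs_ge_0 T.rabs_le_norm_Tinf[OF g] by (rule order_trans)
  have "norm_T1 T (U (V g) - T g) = 2 *\<^sub>R T (riesz.pprt (U (V g) - T g))"
    using g by (simp add: norm_T1_def T_rabs_UV_diff_T Linfty_def)
  also have "\<dots> \<le> 2 *\<^sub>R mul (norm_Tinf E T g) (2 *\<^sub>R alphaT E mul e T U V)"
    using pprt_le T.mul_mono_right[OF N T_rabs_V_diff_T_le_alphaT[OF p]]
    by (intro scaleR_left_mono) simp_all
  also have "\<dots> = 4 *\<^sub>R mul (alphaT E mul e T U V) (norm_Tinf E T g)"
    by (simp add: T.mul_scaleR_right T.mul_commute[of "norm_Tinf E T g"])
  finally show ?thesis .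
qed

end

lemma compatible_tripleI:
  assumes "is_universal_completion_of E" "dedekind_complete_on E" "weak_order_unit E e"
    and "f_algebra_unit mul e" "cond_exp E T" "T e = e" "cond_exp E U" "cond_exp E V"
    and "compatible E T U" "compatible E T V"
  shows "compatible_triple mul e E T U V"
proof -
  have "e \<in> E"
    using assms(3) by (simp add: weak_order_unit_def)
  then have "U e = e" "V e = e"
    using assms(6,9,10) by (metis compatible_def)+
  with assms show ?thesis
    by unfold_locales (simp_all add: is_universal_completion_of_def universally_complete_def
        weak_order_unit_def)
qed

theorem corollary4p9:
  fixes E :: "'a::{ordered_real_vector,lattice} set"
    and mul :: "'a \<Rightarrow> 'a \<Rightarrow> 'a"
    and T U V :: "'a \<Rightarrow> 'a"
    and e g :: 'a
  assumes "is_universal_completion_of E"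
    and "dedekind_complete_on E"
    and "weak_order_unit E e"
    and "f_algebra_unit mul e"
    and "cond_exp E T" and "T e = e"
    and "T_universally_complete E T"
    and "cond_exp E U" and "cond_exp E V"
    and "compatible E T U" and "compatible E T V"
    and "g \<in> Linfty E T"
  shows "norm_T1 T (U (V g) - T g) \<le> 4 *\<^sub>R mul (alphaT E mul e T U V) (norm_Tinf E T g)"
proof -
  have "compatible_triple mul e E T U V"
    using assms(1-6,8-11) by (rule compatible_tripleI)
  then show ?thesis
    using assms(12) by (rule compatible_triple.norm_T1_UV_diff_T_le)
qed

end
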